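(* Let $d\ge 1$, let $x_1<x_2$ be real numbers and $x_0\in[x_1,x_2]$. Let $p,q,r_1,\dots,r_d$ be continuous complex-valued functions on $[x_1,x_2]$, with $p$ continuously differentiable and $p(x)\neq 0$ for all $x$, and let $Ly=(py')'+qy$. Let $u_0$ be a nonvanishing solution of $Lu_0=0$ on $[x_1,x_2]$, and let $\tilde X^{(\mathbf j)}$, $X^{(\mathbf m+\frac1d\mathbf 1)}$ be the formal powers defined in the context. For $\vec\lambda=(\lambda_1,\dots,\lambda_d)\in\mathbb C^d$ define $$u_1=u_0\sum_{\mathbf n\in\mathbb Z_{\ge0}^d}\frac{1}{(2|\mathbf n|)!}\tilde X^{(2\mathbf n)}\lambda^{\mathbf n},\qquad u_2=u_0\sum_{\mathbf n\in\mathbb Z_{\ge0}^d}\frac{1}{(2|\mathbf n|+1)!}X^{(2\mathbf n+\frac1d\mathbf 1)}\lambda^{\mathbf n}.$$ Then for every $\vec\lambda\in\mathbb C^d$ both series converge uniformly on $[x_1,x_2]$, and $u_1,u_2$ are linearly independent solutions of $$(py')'+qy=(\lambda_1r_1+\cdots+\lambda_dr_d)\,y .$$ Moreover their derivatives are given by the uniformly convergent series $$u_1'=\frac{u_0'}{u_0}u_1+\frac{1}{pu_0}\sum_{\mathbf n\in\mathbb Z_{\ge0}^d,\ \mathbf n\neq 0}\frac{1}{(2|\mathbf n|-1)!}\sum_{i=1}^d\tilde X^{(2\mathbf n-\delta_i)}\lambda^{\mathbf n},$$ $$u_2'=\frac{u_0'}{u_0}u_2+\frac{1}{pu_0}\sum_{\mathbf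 n\in\mathbb Z_{\ge0}^d}\frac{1}{(2|\mathbf n|)!}\sum_{i=1}^dX^{(2\mathbf n-\delta_i+\frac1d\mathbf 1)}\lambda^{\mathbf n},$$ and for every $\vec\lambda$ the initial values are $u_1(x_0)=u_0(x_0)$, $u_1'(x_0)=u_0'(x_0)$, $u_2(x_0)=0$, $u_2'(x_0)=\dfrac{1}{p(x_0)u_0(x_0)}$.
   Context: Notation: for a function $f$ on $[x_1,x_2]$, $\int f$ denotes the function $x\mapsto\int_{x_0}^x f(s)\,ds$. For $\mathbf j=(j_1,\dots,j_d)$, $|\mathbf j|=j_1+\cdots+j_d$; $\delta_i$ is the $i$-th standard basis vector; $\mathbf 1=(1,\dots,1)$; $\lambda^{\mathbf n}=\lambda_1^{n_1}\cdots\lambda_d^{n_d}$. Formal powers $\tilde X$: indexed by $\mathbf j\in\mathbb Z^d$. Call $\mathbf j$ admissible if at most one entry $j_i$ is odd; it is even/odd according to the parity of $|\mathbf j|$ (odd admissible means exactly one $j_i$ is odd). Set $\tilde X^{(\mathbf 0)}\equiv1$ and $\tilde X^{(\mathbf j)}\equiv0$ if some $j_i<0$. For admissible $\mathbf j\ge 0$, $\mathbf j\ne\mathbf 0$: if $|\mathbf j|$ is odd and $j_i$ is its odd entry, $\tilde X^{(\mathbf j)}=|\mathbf j|\int r_iu_0^2\,\tilde X^{(\mathbf j-\delta_i)}$; if $|\mathbf j|$ is even, $\tilde X^{(\mathbf j)}=|\mathbf j|\int\frac{1}{pu_0^2}\sum_{i=1}^d\tilde X^{(\mathbf j-\delta_i)}$.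 Formal powers $X$: indexed by $\mathbf j=\mathbf m+\frac1d\mathbf 1$ with $\mathbf m\in\mathbb Z^d$, so $|\mathbf j|=|\mathbf m|+1$. Call $\mathbf j$ admissible if at most one $m_i$ is odd; its parity is that of $|\mathbf j|$. Set $X^{(\frac1d\mathbf 1-\delta_i)}\equiv\frac1d$ for $i=1,\dots,d$, and $X^{(\mathbf m+\frac1d\mathbf 1)}\equiv0$ whenever some $m_i<0$ and $\mathbf m$ is not one of $-\delta_1,\dots,-\delta_d$. For admissible $\mathbf j=\mathbf m+\frac1d\mathbf 1$ with $\mathbf m\ge0$: if $|\mathbf j|$ is even (so exactly one $m_i$ is odd), $X^{(\mathbf j)}=|\mathbf j|\int r_iu_0^2\,X^{(\mathbf j-\delta_i)}$ with that index $i$; if $|\mathbf j|$ is odd, $X^{(\mathbf j)}=|\mathbf j|\int\frac{1}{pu_0^2}\sum_{i=1}^dX^{(\mathbf j-\delta_i)}$. *)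

theory Defs
  imports "HOL-Analysis.Analysis"
begin

definition oint :: "real \<Rightarrow> real \<Rightarrow> (real \<Rightarrow> complex) \<Rightarrow> complex" where
  "oint a b f = (if a \<le> b then integral {a..b} f else - integral {b..a} f)"

(* Multi-indices in Z_{\<ge>0}^d are lists of naturals of length d. *)
definition admissible :: "nat list \<Rightarrow> bool" where
  "admissible j \<longleftrightarrow> card {i. i < length j \<and> odd (j ! i)} \<le> 1"

definition odd_idx :: "nat list \<Rightarrow> nat" where
  "odd_idx j = (THE i. i < length j \<and> odd (j ! i))"

(* j - \<delta>_i (only used when j!i > 0) *)
definition dec :: "nat list \<Rightarrow> nat \<Rightarrow> nat list" where
  "dec j i = j[i := j ! i - 1]"

definition dbl :: "nat list \<Rightarrow> nat list" where
  "dbl n = map (\<lambda>k. 2 * k) n"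

definition lampow :: "(nat \<Rightarrow> complex) \<Rightarrow> nat list \<Rightarrow> complex" where
  "lampow lam n = (\<Prod>i<length n. lam i ^ (n ! i))"

(* Formal powers \<tilde>X^{(j)}, computed by level n = |j|;
   entries with a negative component are 0; non-admissible indices (never used) are set to 0. *)
primrec XtL :: "real \<Rightarrow> (real \<Rightarrow> complex) \<Rightarrow> (nat \<Rightarrow> real \<Rightarrow> complex) \<Rightarrow> (real \<Rightarrow> complex)
    \<Rightarrow> nat \<Rightarrow> nat list \<Rightarrow> real \<Rightarrow> complex" where
  "XtL x0 p r u0 0 j = (\<lambda>x. 1)"
| "XtL x0 p r u0 (Suc n) j =
    (if admissible j then
       (if odd (Suc n) then
          (let i = odd_idx j in
            (\<lambda>x. of_nat (Suc n) * oint x0 x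
               (\<lambda>s. r i s * (u0 s)^2 * (if 0 < j ! i then XtL x0 p r u0 n (dec j i) s else 0))))
        else
          (\<lambda>x. of_nat (Suc n) * oint x0 x
             (\<lambda>s. (\<Sum>i<length j. if 0 < j ! i then XtL x0 p r u0 n (dec j i) s else 0)
                    / (p s * (u0 s)^2))))
     else (\<lambda>x. 0))"

definition Xt :: "real \<Rightarrow> (real \<Rightarrow> complex) \<Rightarrow> (nat \<Rightarrow> real \<Rightarrow> complex) \<Rightarrow> (real \<Rightarrow> complex)
    \<Rightarrow> nat list \<Rightarrow> real \<Rightarrow> complex" where
  "Xt x0 p r u0 j = XtL x0 p r u0 (sum_list j) j"

definition Xt_minus :: "real \<Rightarrow> (real \<Rightarrow> complex) \<Rightarrow> (nat \<Rightarrow> real \<Rightarrow> complex) \<Rightarrow> (real \<Rightarrow> complex)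
    \<Rightarrow> nat list \<Rightarrow> nat \<Rightarrow> real \<Rightarrow> complex" where
  "Xt_minus x0 p r u0 j i = (if 0 < j ! i then Xt x0 p r u0 (dec j i) else (\<lambda>_. 0))"

(* Formal powers X^{(m + 1/d 1)} for m \<ge> 0, computed by level n = |m| (so |j| = n+1).
   Base values X^{(1/d 1 - \<delta>_i)} = 1/d, other indices with a negative entry give 0. *)
primrec XL :: "real \<Rightarrow> (real \<Rightarrow> complex) \<Rightarrow> (nat \<Rightarrow> real \<Rightarrow> complex) \<Rightarrow> (real \<Rightarrow> complex)
    \<Rightarrow> nat \<Rightarrow> nat list \<Rightarrow> real \<Rightarrow> complex" where
  "XL x0 p r u0 0 m =
     (\<lambda>x. oint x0 x (\<lambda>s. (\<Sum>i<length m. 1 / of_nat (length m)) / (p s * (u0 s)^2)))"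
| "XL x0 p r u0 (Suc n) m =
    (if admissible m then
       (if even (Suc n + 1) then
          (let i = odd_idx m in
            (\<lambda>x. of_nat (Suc n + 1) * oint x0 x
               (\<lambda>s. r i s * (u0 s)^2 * (if 0 < m ! i then XL x0 p r u0 n (dec m i) s else 0))))
        else
          (\<lambda>x. of_nat (Suc n + 1) * oint x0 x
             (\<lambda>s. (\<Sum>i<length m. if 0 < m ! i then XL x0 p r u0 n (dec m i) s else 0)
                    / (p s * (u0 s)^2))))
     else (\<lambda>x. 0))"

definition Xf :: "real \<Rightarrow> (real \<Rightarrow> complex) \<Rightarrow> (nat \<Rightarrow> real \<Rightarrow> complex) \<Rightarrow> (real \<Rightarrow> complex)
    \<Rightarrow> nat list \<Rightarrow> real \<Rightarrow> complex" where
  "Xf x0 p r u0 m = XL x0 p r u0 (sum_list m) m"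

definition Xf_minus :: "real \<Rightarrow> (real \<Rightarrow> complex) \<Rightarrow> (nat \<Rightarrow> real \<Rightarrow> complex) \<Rightarrow> (real \<Rightarrow> complex)
    \<Rightarrow> nat list \<Rightarrow> nat \<Rightarrow> real \<Rightarrow> complex" where
  "Xf_minus x0 p r u0 m i =
     (if 0 < m ! i then Xf x0 p r u0 (dec m i)
      else if (\<forall>k<length m. m ! k = 0) then (\<lambda>_. 1 / of_nat (length m))
      else (\<lambda>_. 0))"

(* y solves (p y')' + q y = w y on I, with derivative y' (one-sided at endpoints) *)
definition ode_sol :: "real set \<Rightarrow> (real \<Rightarrow> complex) \<Rightarrow> (real \<Rightarrow> complex) \<Rightarrow> (real \<Rightarrow> complex)
    \<Rightarrow> (real \<Rightarrow> complex) \<Rightarrow> (real \<Rightarrow> complex) \<Rightarrow> bool" where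
  "ode_sol I p q w y y' \<longleftrightarrow>
     (\<forall>x\<in>I. (y has_vector_derivative y' x) (at x within I)) \<and>
     (\<forall>x\<in>I. ((\<lambda>t. p t * y' t) has_vector_derivative ((w x - q x) * y x)) (at x within I))"


definition ta1 :: "real \<Rightarrow> (real \<Rightarrow> complex) \<Rightarrow> (nat \<Rightarrow> real \<Rightarrow> complex) \<Rightarrow> (real \<Rightarrow> complex)
    \<Rightarrow> (nat \<Rightarrow> complex) \<Rightarrow> nat list \<Rightarrow> real \<Rightarrow> complex" where
  "ta1 x0 p r u0 lam n x = Xt x0 p r u0 (dbl n) x * lampow lam n / fact (2 * sum_list n)"

definition ta2 :: "real \<Rightarrow> (real \<Rightarrow> complex) \<Rightarrow> (nat \<Rightarrow> real \<Rightarrow> complex) \<Rightarrow> (real \<Rightarrow> complex)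
    \<Rightarrow> (nat \<Rightarrow> complex) \<Rightarrow> nat list \<Rightarrow> real \<Rightarrow> complex" where
  "ta2 x0 p r u0 lam n x = Xf x0 p r u0 (dbl n) x * lampow lam n / fact (2 * sum_list n + 1)"

definition tb1 :: "real \<Rightarrow> (real \<Rightarrow> complex) \<Rightarrow> (nat \<Rightarrow> real \<Rightarrow> complex) \<Rightarrow> (real \<Rightarrow> complex)
    \<Rightarrow> (nat \<Rightarrow> complex) \<Rightarrow> nat list \<Rightarrow> real \<Rightarrow> complex" where
  "tb1 x0 p r u0 lam n x =
     (\<Sum>i<length n. Xt_minus x0 p r u0 (dbl n) i x) * lampow lam n / fact (2 * sum_list n - 1)"

definition tb2 :: "real \<Rightarrow> (real \<Rightarrow> complex) \<Rightarrow> (nat \<Rightarrow> real \<Rightarrow> complex) \<Rightarrow> (real \<Rightarrow> complex)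
    \<Rightarrow> (nat \<Rightarrow> complex) \<Rightarrow> nat list \<Rightarrow> real \<Rightarrow> complex" where
  "tb2 x0 p r u0 lam n x =
     (\<Sum>i<length n. Xf_minus x0 p r u0 (dbl n) i x) * lampow lam n / fact (2 * sum_list n)"

end

theory Submission
  imports Defs
begin

text \<open>
  Writing \<open>u = u0 S\<close>, the equation \<open>(p u')' + q u = w u\<close> becomes the first-order system
  \<open>S' = T / (p u0\<^sup>2)\<close>, \<open>T' = w u0\<^sup>2 S\<close>, where \<open>T = p u0\<^sup>2 S'\<close>.
  The formal powers are defined so that the two series in the theorem satisfy this system term by
  term: differentiating a term of \<open>T\<close> and shifting the multi-index \<open>n \<mapsto> n - \<delta>\<^sub>i\<close> gives
  \<open>\<lambda>\<^sub>i r\<^sub>i u0\<^sup>2\<close> times a term of \<open>S\<close>.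

  For convergence, induction along the recursion gives \<open>|X\<^bsup>(j)\<^esup>(x)| \<le> (d K |x - x0|)\<^bsup>|j|\<^esup>\<close>,
  where \<open>K\<close> bounds \<open>|r\<^sub>i u0\<^sup>2|\<close> and \<open>|1/(p u0\<^sup>2)|\<close>: each integration raises the exponent by one and
  the factor \<open>|j|\<close> in the recursion is absorbed by integrating the power. Hence every term is
  dominated by \<open>C G\<^bsup>|n|\<^esup> / |n|!\<close>, which is summable over multi-indices because
  \<open>|n|! \<ge> n\<^sub>1! \<cdots> n\<^sub>d!\<close>. The Weierstrass M-test and termwise differentiation of uniformly
  convergent sums then give the system. The integrals vanish at \<open>x0\<close>, which yields the initial
  values, and \<open>u2(x0) = 0 \<noteq> u2'(x0)\<close> yields independence.
\<close>

section \<open>Oriented integrals\<close>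

lemma oint_self [simp]: "oint a a g = 0"
  by (simp add: oint_def)

lemma oint_eq_integral_diff:
  fixes g :: "real \<Rightarrow> complex"
  assumes "continuous_on {a..b} g" "x0 \<in> {a..b}" "x \<in> {a..b}"
  shows "oint x0 x g = integral {a..x} g - integral {a..x0} g"
proof (cases "x0 \<le> x")
  case True
  have "integral {a..x0} g + integral {x0..x} g = integral {a..x} g"
    using assms True
    by (intro Henstock_Kurzweil_Integration.integral_combine integrable_continuous_interval continuous_on_subset[OF assms(1)]) auto
  then show ?thesis using True by (simp add: oint_def algebra_simps)
next
  case False
  have "integral {a..x} g + integral {x..x0} g = integral {a..x0} g"
    using assms False
    by (intro Henstock_Kurzweil_Integration.integral_combine integrable_continuous_interval continuous_on_subset[OF assms(1)]) auto
  then show ?thesis using False by (simp add: oint_def algebra_simps)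
qed

lemma has_vector_derivative_oint:
  fixes g :: "real \<Rightarrow> complex"
  assumes "continuous_on {a..b} g" "x0 \<in> {a..b}" "x \<in> {a..b}"
  shows "((\<lambda>x. oint x0 x g) has_vector_derivative g x) (at x within {a..b})"
proof -
  have "((\<lambda>y. integral {a..y} g - integral {a..x0} g) has_vector_derivative g x - 0) (at x within {a..b})"
    by (intro derivative_intros integral_has_vector_derivative assms)
  then have "((\<lambda>y. integral {a..y} g - integral {a..x0} g) has_vector_derivative g x) (at x within {a..b})"
    by simp
  then show ?thesis
    by (rule has_vector_derivative_transform[OF assms(3), rotated])
       (simp add: oint_eq_integral_diff[OF assms(1,2)])
qed

lemma continuous_on_oint:
  fixes g :: "real \<Rightarrow> complex"
  assumes "continuous_on {a..b} g" "x0 \<in> {a..b}"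
  shows "continuous_on {a..b} (\<lambda>x. oint x0 x g)"
  by (rule continuous_on_vector_derivative, rule has_vector_derivative_oint[OF assms])

lemma norm_oint_le_power:
  fixes g :: "real \<Rightarrow> complex"
  assumes cont: "continuous_on {a..b} g" and x0: "x0 \<in> {a..b}" and x: "x \<in> {a..b}"
    and bound: "\<And>s. s \<in> {a..b} \<Longrightarrow> norm (g s) \<le> M * \<bar>s - x0\<bar> ^ k"
  shows "norm (oint x0 x g) \<le> M * \<bar>x - x0\<bar> ^ Suc k / Suc k"
proof (cases "x0 \<le> x")
  case True
  have sub: "{x0..x} \<subseteq> {a..b}" using x0 x by auto
  have int: "((\<lambda>s. M * (s - x0) ^ k) has_integral M * (x - x0) ^ Suc k / Suc k) {x0..x}"
  proof -
    have "((\<lambda>s. M * (s - x0) ^ k) has_integral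
        M * (x - x0) ^ Suc k / Suc k - M * (x0 - x0) ^ Suc k / Suc k) {x0..x}"
    proof (rule fundamental_theorem_of_calculus)
      fix s assume "s \<in> {x0..x}"
      have "((\<lambda>s. M * (s - x0) ^ Suc k / Suc k) has_real_derivative
          M * (of_nat (Suc k) * (s - x0) ^ k * 1) / Suc k) (at s within {x0..x})"
        by (intro derivative_eq_intros) auto
      then show "((\<lambda>s. M * (s - x0) ^ Suc k / Suc k) has_vector_derivative M * (s - x0) ^ k)
          (at s within {x0..x})"
        by (simp add: has_real_derivative_iff_has_vector_derivative)
    qed (use True in auto)
    then show ?thesis by simp
  qed
  have "norm (g s) \<le> M * (s - x0) ^ k" if "s \<in> {x0..x}" for s
    using bound[of s] sub that by auto
  then have "norm (integral {x0..x} g) \<le> integral {x0..x} (\<lambda>s. M * (s - x0) ^ k)"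
    using int sub
    by (intro integral_norm_bound_integral)
       (auto intro!: integrable_continuous_interval continuous_on_subset[OF cont] continuous_intros)
  then show ?thesis using True integral_unique[OF int] by (simp add: oint_def)
next
  case False
  have sub: "{x..x0} \<subseteq> {a..b}" using x0 x by auto
  have int: "((\<lambda>s. M * (x0 - s) ^ k) has_integral M * (x0 - x) ^ Suc k / Suc k) {x..x0}"
  proof -
    have "((\<lambda>s. M * (x0 - s) ^ k) has_integral
        - M * (x0 - x0) ^ Suc k / Suc k - - M * (x0 - x) ^ Suc k / Suc k) {x..x0}"
    proof (rule fundamental_theorem_of_calculus)
      fix s assume "s \<in> {x..x0}"
      have "((\<lambda>s. - M * (x0 - s) ^ Suc k / Suc k) has_real_derivative
          - M * (of_nat (Suc k) * (x0 - s) ^ k * (0 - 1)) / Suc k) (at s within {x..x0})"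
        by (intro derivative_eq_intros) auto
      then show "((\<lambda>s. - M * (x0 - s) ^ Suc k / Suc k) has_vector_derivative M * (x0 - s) ^ k)
          (at s within {x..x0})"
        by (simp add: has_real_derivative_iff_has_vector_derivative)
    qed (use False in auto)
    then show ?thesis by simp
  qed
  have "norm (g s) \<le> M * (x0 - s) ^ k" if "s \<in> {x..x0}" for s
    using bound[of s] sub that by (auto simp: abs_minus_commute)
  then have "norm (integral {x..x0} g) \<le> integral {x..x0} (\<lambda>s. M * (x0 - s) ^ k)"
    using int sub
    by (intro integral_norm_bound_integral)
       (auto simp: abs_minus_commute intro!: integrable_continuous_interval continuous_on_subset[OF cont] continuous_intros)
  then show ?thesis using False integral_unique[OF int] by (simp add: oint_def abs_minus_commute)
qed

section \<open>Unordered sums of functions\<close>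

lemma has_sum_integral_of_uniform_limit:
  fixes f g :: "'a \<Rightarrow> real \<Rightarrow> complex" and G :: "real \<Rightarrow> complex"
  assumes "a \<le> y"
    and cont: "\<And>n. n \<in> A \<Longrightarrow> continuous_on {a..y} (g n)"
    and deriv: "\<And>n s. n \<in> A \<Longrightarrow> s \<in> {a..y} \<Longrightarrow> (f n has_vector_derivative g n s) (at s within {a..y})"
    and unif: "uniform_limit {a..y} (\<lambda>F s. \<Sum>n\<in>F. g n s) G (finite_subsets_at_top A)"
  shows "((\<lambda>n. f n y - f n a) has_sum integral {a..y} G) A"
proof -
  let ?F = "finite_subsets_at_top A"
  \<comment> \<open>Summing over \<open>F \<inter> A\<close> makes every partial sum continuous, as the integral limit theorem requires.\<close>
  define gs where "gs F s = (\<Sum>n\<in>F \<inter> A. g n s)" for F s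
  have in_A: "\<forall>\<^sub>F F in ?F. finite F \<and> F \<subseteq> A"
    by (rule eventually_finite_subsets_at_top_weakI) auto
  have "\<forall>\<^sub>F F in ?F. \<forall>s\<in>{a..y}. (\<Sum>n\<in>F. g n s) = gs F s"
    using in_A by eventually_elim (auto simp: gs_def Int_absorb2)
  then have "uniform_limit {a..y} gs G ?F"
    using unif by (subst (asm) uniform_limit_cong) auto
  moreover have "continuous_on {a..y} (gs F)" for F
    unfolding gs_def by (intro continuous_on_sum cont) auto
  ultimately obtain I J where I: "\<And>F. (gs F has_integral I F) {a..y}"
      and J: "(G has_integral J) {a..y}" and IJ: "(I \<longlongrightarrow> J) ?F"
    using uniform_limit_integral finite_subsets_at_top_neq_bot by metis
  have "\<forall>\<^sub>F F in ?F. I F = (\<Sum>n\<in>F. f n y - f n a)"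
    using in_A
  proof eventually_elim
    case (elim F)
    have "(g n has_integral (f n y - f n a)) {a..y}" if "n \<in> F" for n
      using that elim \<open>a \<le> y\<close> by (intro fundamental_theorem_of_calculus deriv) auto
    then have "((\<lambda>s. \<Sum>n\<in>F. g n s) has_integral (\<Sum>n\<in>F. f n y - f n a)) {a..y}"
      using elim by (intro has_integral_sum) auto
    moreover have "gs F = (\<lambda>s. \<Sum>n\<in>F. g n s)"
      using elim by (simp add: gs_def Int_absorb2 fun_eq_iff)
    ultimately have "(gs F has_integral (\<Sum>n\<in>F. f n y - f n a)) {a..y}"
      by simp
    then show ?case using I by (rule has_integral_unique[rotated])
  qed
  with IJ have "((\<lambda>F. \<Sum>n\<in>F. f n y - f n a) \<longlongrightarrow> J) ?F"
    by (rule Lim_transform_eventually)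
  then show ?thesis
    using integral_unique[OF J] by (simp add: has_sum_def)
qed

lemma has_vector_derivative_has_sum:
  fixes f g :: "'a \<Rightarrow> real \<Rightarrow> complex" and Sf G :: "real \<Rightarrow> complex"
  assumes "a \<le> b" and x: "x \<in> {a..b}"
    and cont: "\<And>n. n \<in> A \<Longrightarrow> continuous_on {a..b} (g n)"
    and deriv: "\<And>n s. n \<in> A \<Longrightarrow> s \<in> {a..b} \<Longrightarrow> (f n has_vector_derivative g n s) (at s within {a..b})"
    and unif: "uniform_limit {a..b} (\<lambda>F s. \<Sum>n\<in>F. g n s) G (finite_subsets_at_top A)"
    and sums: "\<And>s. s \<in> {a..b} \<Longrightarrow> ((\<lambda>n. f n s) has_sum Sf s) A"
  shows "(Sf has_vector_derivative G x) (at x within {a..b})"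
proof -
  have Sf_eq: "Sf y = Sf a + integral {a..y} G" if y: "y \<in> {a..b}" for y
  proof -
    have sub: "{a..y} \<subseteq> {a..b}" using y by auto
    have "((\<lambda>n. f n y - f n a) has_sum integral {a..y} G) A"
      using y sub
      by (intro has_sum_integral_of_uniform_limit[where g = g] uniform_limit_on_subset[OF unif]
          continuous_on_subset[OF cont] has_vector_derivative_within_subset[OF deriv]) auto
    moreover have "((\<lambda>n. f n y - f n a) has_sum Sf y - Sf a) A"
      using y \<open>a \<le> b\<close> sums unfolding has_sum_def sum_subtractf by (intro tendsto_diff) auto
    ultimately show ?thesis
      using has_sum_unique by fastforce
  qed
  have "\<forall>\<^sub>F F in finite_subsets_at_top A. continuous_on {a..b} (\<lambda>s. \<Sum>n\<in>F. g n s)"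
    by (intro eventually_finite_subsets_at_top_weakI continuous_on_sum cont) auto
  then have "continuous_on {a..b} G"
    using unif by (rule uniform_limit_theorem) (simp add: finite_subsets_at_top_neq_bot)
  then have "((\<lambda>y. Sf a + integral {a..y} G) has_vector_derivative G x) (at x within {a..b})"
    using x by (auto intro!: derivative_eq_intros integral_has_vector_derivative)
  with Sf_eq show ?thesis
    by (rule has_vector_derivative_transform[OF x])
qed

lemma has_sum_sum:
  fixes f :: "'i \<Rightarrow> 'a \<Rightarrow> 'b::topological_comm_monoid_add"
  assumes "finite I" "\<And>i. i \<in> I \<Longrightarrow> (f i has_sum s i) A"
  shows "((\<lambda>n. \<Sum>i\<in>I. f i n) has_sum (\<Sum>i\<in>I. s i)) A"
  using assms by (induction I rule: finite_induct) (auto intro!: has_sum_add)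

lemma continuous_on_if_const:
  "(c \<Longrightarrow> continuous_on S f) \<Longrightarrow> (\<not> c \<Longrightarrow> continuous_on S g) \<Longrightarrow>
    continuous_on S (\<lambda>x. if c then f x else g x)"
  by (cases c) auto

lemma infsum_if_eq:
  fixes c :: "'b::{comm_monoid_add, t2_space}"
  assumes "a \<in> A"
  shows "(\<Sum>\<^sub>\<infinity>n\<in>A. if n = a then c else 0) = c"
proof -
  have "(\<Sum>\<^sub>\<infinity>n\<in>A. if n = a then c else 0) = (\<Sum>\<^sub>\<infinity>n\<in>{a}. if n = a then c else 0)"
    using assms by (intro infsum_cong_neutral) auto
  then show ?thesis by simp
qed

section \<open>Multi-indices\<close>

lemma length_dec [simp]: "length (dec n i) = length n"
  by (simp add: dec_def)

lemma nth_dec: "k < length n \<Longrightarrow> dec n i ! k = (if k = i then n ! i - 1 else n ! k)"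
  by (simp add: dec_def nth_list_update)

lemma sum_list_dec: "i < length n \<Longrightarrow> 0 < n ! i \<Longrightarrow> sum_list (dec n i) = sum_list n - 1"
proof (induction n arbitrary: i)
  case (Cons a n)
  then show ?case
    using elem_le_sum_list[of "i - 1" n] by (cases i) (auto simp: dec_def)
qed simp

lemma sum_list_eq_0_iff_replicate: "sum_list n = 0 \<longleftrightarrow> n = replicate (length n) (0::nat)"
  by (induction n) auto

lemma has_sum_shift_multi_index:
  fixes F :: "nat list \<Rightarrow> 'a::{comm_monoid_add, topological_space}"
  assumes F: "(F has_sum S) {n. length n = d}" and i: "i < d"
  shows "((\<lambda>n. if 0 < n ! i then F (dec n i) else 0) has_sum S) {n. length n = d}"
proof -
  define B where "B = {n::nat list. length n = d \<and> 0 < n ! i}"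
  define inc where "inc m = m[i := m ! i + 1]" for m :: "nat list"
  have bij: "bij_betw (\<lambda>n. dec n i) B {n. length n = d}"
  proof (rule bij_betw_byWitness[where f' = inc])
    show "\<forall>n\<in>B. inc (dec n i) = n" "\<forall>m\<in>{n. length n = d}. dec (inc m) i = m"
      using i by (auto simp: B_def inc_def dec_def list_eq_iff_nth_eq nth_list_update)
    show "(\<lambda>n. dec n i) ` B \<subseteq> {n. length n = d}" "inc ` {n. length n = d} \<subseteq> B"
      using i by (auto simp: B_def inc_def nth_list_update)
  qed
  then have "((\<lambda>n. F (dec n i)) has_sum S) B"
    using has_sum_reindex_bij_betw[OF bij, of F S] F by simp
  then show ?thesis
    by (subst has_sum_cong_neutral[where T = B]) (auto simp: B_def)
qed

lemma has_sum_sum_shift_multi_index: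
  fixes F :: "nat \<Rightarrow> nat list \<Rightarrow> 'a::topological_comm_monoid_add"
  assumes "\<And>i. i < d \<Longrightarrow> (F i has_sum S i) {n. length n = d}"
  shows "((\<lambda>n. \<Sum>i<d. if 0 < n ! i then F i (dec n i) else 0) has_sum (\<Sum>i<d. S i)) {n. length n = d}"
  using assms by (intro has_sum_sum has_sum_shift_multi_index) auto

lemma lampow_dec:
  assumes "i < length n" "0 < n ! i"
  shows "lampow lam n = lam i * lampow lam (dec n i)"
proof -
  have fin: "finite {..<length n}" by simp
  have "lampow lam n = lam i ^ (n ! i) * (\<Prod>k\<in>{..<length n} - {i}. lam k ^ (n ! k))"
    unfolding lampow_def using assms by (subst prod.remove[OF fin, of i]) auto
  also have "(\<Prod>k\<in>{..<length n} - {i}. lam k ^ (n ! k)) = (\<Prod>k\<in>{..<length n} - {i}. lam k ^ (dec n i ! k))"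
    by (rule prod.cong) (auto simp: nth_dec)
  also have "lam i ^ (n ! i) = lam i * lam i ^ (dec n i ! i)"
    using assms by (cases "n ! i") (auto simp: nth_dec)
  finally have "lampow lam n = lam i * (lam i ^ (dec n i ! i) * (\<Prod>k\<in>{..<length n} - {i}. lam k ^ (dec n i ! k)))"
    by (simp add: mult_ac)
  also have "lam i ^ (dec n i ! i) * (\<Prod>k\<in>{..<length n} - {i}. lam k ^ (dec n i ! k)) = lampow lam (dec n i)"
    unfolding lampow_def length_dec using assms by (subst prod.remove[OF fin, of i]) auto
  finally show ?thesis .
qed

lemma norm_lampow_le:
  assumes "\<And>i. i < length n \<Longrightarrow> norm (lam i) \<le> L"
  shows "norm (lampow lam n) \<le> L ^ sum_list n"
proof -
  have "norm (lampow lam n) = (\<Prod>k<length n. norm (lam k) ^ (n ! k))"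
    unfolding lampow_def by (simp add: prod_norm[symmetric] norm_power)
  also have "\<dots> \<le> (\<Prod>k<length n. L ^ (n ! k))"
    using assms by (intro prod_mono conjI power_mono) auto
  also have "\<dots> = L ^ sum_list n"
    by (simp add: power_sum[symmetric] sum_list_sum_nth atLeast0LessThan)
  finally show ?thesis .
qed

lemma summable_on_prod_list_exp:
  fixes G :: real
  assumes "G \<ge> 0"
  shows "(\<lambda>n. prod_list (map (\<lambda>k. G ^ k / fact k) n)) summable_on {n. length n = d}"
proof (induction d)
  case 0
  have "{n::nat list. length n = 0} = {[]}" by auto
  then show ?case by simp
next
  case (Suc d)
  define P where "P n = prod_list (map (\<lambda>k. G ^ k / fact k) n)" for n
  define B where "B = {n::nat list. length n = d}"
  have P_nonneg: "P n \<ge> 0" for n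
    unfolding P_def using assms by (induction n) auto
  have "(\<lambda>(k, n). G ^ k / fact k * P n) summable_on UNIV \<times> B"
  proof (rule summable_on_SigmaI)
    fix k :: nat
    have "(P has_sum infsum P B) B"
      using has_sum_infsum[OF Suc.IH] unfolding P_def[abs_def] B_def .
    from has_sum_cmult_right[OF this, of "G ^ k / fact k"]
    show "((\<lambda>n. (\<lambda>(k, n). G ^ k / fact k * P n) (k, n)) has_sum G ^ k / fact k * infsum P B) B"
      by simp
  next
    have "summable (\<lambda>k. G ^ k / fact k * infsum P B)"
      using summable_exp[of G] by (intro summable_mult2) (simp add: divide_inverse mult.commute)
    then show "(\<lambda>k. G ^ k / fact k * infsum P B) summable_on UNIV"
      using assms P_nonneg by (subst summable_on_UNIV_nonneg_real_iff)
         (auto intro!: infsum_nonneg divide_nonneg_nonneg mult_nonneg_nonneg)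
  qed (use assms P_nonneg in auto)
  then have "(P \<circ> (\<lambda>(k, n). k # n)) summable_on UNIV \<times> B"
    by (rule summable_on_cong[THEN iffD1, rotated]) (auto simp: P_def)
  moreover have "inj_on (\<lambda>(k::nat, n). k # n) (UNIV \<times> B)"
    by (auto simp: inj_on_def)
  moreover have "{n::nat list. length n = Suc d} = (\<lambda>(k, n). k # n) ` (UNIV \<times> B)"
    by (auto simp: B_def length_Suc_conv image_iff)
  ultimately show ?case
    by (simp add: summable_on_reindex P_def[abs_def])
qed

lemma power_fact_sum_list_le_prod_list:
  fixes G :: real
  assumes "G \<ge> 0"
  shows "G ^ sum_list n / fact (sum_list n) \<le> prod_list (map (\<lambda>k. G ^ k / fact k) n)"
proof (induction n)
  case (Cons k n)
  have "fact k * fact (sum_list n) \<le> (fact (k + sum_list n) :: nat)"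
    by (rule dvd_imp_le[OF fact_fact_dvd_fact]) auto
  then have "real (fact k * fact (sum_list n)) \<le> fact (k + sum_list n)"
    by (metis of_nat_fact of_nat_le_iff)
  then have "G ^ sum_list (k # n) / fact (sum_list (k # n)) \<le> G ^ k * G ^ sum_list n / (fact k * fact (sum_list n))"
    using assms by (simp add: power_add) (intro divide_left_mono, auto intro!: mult_pos_pos)
  also have "\<dots> = G ^ k / fact k * (G ^ sum_list n / fact (sum_list n))"
    by simp
  also have "\<dots> \<le> G ^ k / fact k * prod_list (map (\<lambda>k. G ^ k / fact k) n)"
    using Cons assms by (intro mult_left_mono) auto
  finally show ?case by simp
qed simp

lemma summable_on_power_fact_sum_list:
  fixes G :: real
  assumes "G \<ge> 0"
  shows "(\<lambda>n. G ^ sum_list n / fact (sum_list n)) summable_on {n. length n = d}"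
  by (rule summable_on_comparison_test[OF summable_on_prod_list_exp[OF assms]])
     (use assms power_fact_sum_list_le_prod_list in auto)

section \<open>The recursion at doubled indices\<close>

lemma odd_idx_eq:
  assumes "admissible j" "i < length j" "odd (j ! i)"
  shows "odd_idx j = i"
  unfolding odd_idx_def
proof (rule the_equality)
  fix k assume k: "k < length j \<and> odd (j ! k)"
  have "card {i. i < length j \<and> odd (j ! i)} \<le> Suc 0"
    using assms(1) by (simp add: admissible_def)
  then show "k = i" using k assms(2,3) card_le_Suc0_iff_eq[of "{i. i < length j \<and> odd (j ! i)}"] by auto
qed (use assms in simp)

lemma even_sum_list: "(\<And>i. i < length j \<Longrightarrow> even (j ! i)) \<Longrightarrow> even (sum_list (j::nat list))"
proof (induction j)
  case (Cons a j)
  then show ?case using Cons.prems[of 0] Cons.prems[of "Suc _"] by auto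
qed simp

lemma odd_idx_less:
  assumes "admissible j" "odd (sum_list j)"
  shows "odd_idx j < length j"
proof -
  obtain i where "i < length j" "odd (j ! i)"
    using assms(2) even_sum_list by blast
  then show ?thesis
    using odd_idx_eq[OF assms(1)] by simp
qed

lemma length_dbl [simp]: "length (dbl n) = length n"
  by (simp add: dbl_def)

lemma nth_dbl [simp]: "i < length n \<Longrightarrow> dbl n ! i = 2 * (n ! i)"
  by (simp add: dbl_def)

lemma sum_list_dbl [simp]: "sum_list (dbl n) = 2 * sum_list n"
  unfolding dbl_def by (induction n) auto

lemma admissible_dbl: "admissible (dbl n)"
proof -
  have "{i. i < length n \<and> odd (dbl n ! i)} = {}" by auto
  then show ?thesis unfolding admissible_def length_dbl by (simp only: card.empty)
qed

lemma admissible_dec_dbl: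
  assumes "i < length n" "0 < n ! i"
  shows "admissible (dec (dbl n) i)" "odd_idx (dec (dbl n) i) = i"
proof -
  have "{k. k < length (dec (dbl n) i) \<and> odd (dec (dbl n) i ! k)} \<subseteq> {i}"
    using assms by (auto simp: nth_dec split: if_splits)
  then have "card {k. k < length (dec (dbl n) i) \<and> odd (dec (dbl n) i ! k)} \<le> card {i}"
    by (intro card_mono) auto
  then show adm: "admissible (dec (dbl n) i)"
    by (simp add: admissible_def)
  show "odd_idx (dec (dbl n) i) = i"
    by (rule odd_idx_eq[OF adm]) (use assms in \<open>auto simp: nth_dec\<close>)
qed

lemma dec_dec_dbl: "i < length n \<Longrightarrow> 0 < n ! i \<Longrightarrow> dec (dec (dbl n) i) i = dbl (dec n i)"
  by (auto simp: list_eq_iff_nth_eq nth_dec)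

lemma Xt_dbl:
  assumes "0 < sum_list n"
  shows "Xt x0 p r u0 (dbl n) = (\<lambda>x. of_nat (2 * sum_list n) *
     oint x0 x (\<lambda>s. (\<Sum>i<length n. Xt_minus x0 p r u0 (dbl n) i s) / (p s * u0 s ^ 2)))"
proof -
  obtain k where k: "2 * sum_list n = Suc k" using assms by (cases "2 * sum_list n") auto
  have ev: "even (Suc k)" using k by (metis dvd_triv_left)
  have inner: "(\<Sum>i<length (dbl n). if 0 < dbl n ! i then XtL x0 p r u0 k (dec (dbl n) i) s else 0)
     = (\<Sum>i<length n. Xt_minus x0 p r u0 (dbl n) i s)" for s
    by (rule sum.cong) (use k in \<open>auto simp: Xt_minus_def Xt_def sum_list_dec\<close>)
  have "Xt x0 p r u0 (dbl n) = XtL x0 p r u0 (Suc k) (dbl n)"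
    by (simp add: Xt_def k)
  also have "\<dots> = (\<lambda>x. of_nat (Suc k) * oint x0 x (\<lambda>s. (\<Sum>i<length (dbl n). if 0 < dbl n ! i
      then XtL x0 p r u0 k (dec (dbl n) i) s else 0) / (p s * u0 s ^ 2)))"
    using ev admissible_dbl[of n] by (simp del: of_nat_Suc length_dbl)
  finally show ?thesis
    by (simp only: inner k)
qed

lemma Xt_minus_dbl:
  assumes i: "i < length n" and pos: "0 < n ! i"
  shows "Xt_minus x0 p r u0 (dbl n) i = (\<lambda>x. of_nat (2 * sum_list n - 1) *
     oint x0 x (\<lambda>s. r i s * u0 s ^ 2 * Xt x0 p r u0 (dbl (dec n i)) s))"
proof -
  have s1: "1 \<le> sum_list n" using elem_le_sum_list[OF i] pos by simp
  have sj: "sum_list (dec (dbl n) i) = Suc (2 * sum_list n - 2)"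
    using sum_list_dec[of i "dbl n"] i pos s1 by simp
  have od: "odd (Suc (2 * sum_list n - 2))" using s1 by presburger
  have sd: "sum_list (dbl (dec n i)) = 2 * sum_list n - 2"
    using sum_list_dec[OF i pos] by simp
  have "Xt_minus x0 p r u0 (dbl n) i = XtL x0 p r u0 (Suc (2 * sum_list n - 2)) (dec (dbl n) i)"
    using i pos by (simp add: Xt_minus_def Xt_def sj)
  also have "\<dots> = (\<lambda>x. of_nat (Suc (2 * sum_list n - 2)) *
      oint x0 x (\<lambda>s. r i s * u0 s ^ 2 * XtL x0 p r u0 (2 * sum_list n - 2) (dbl (dec n i)) s))"
    using od admissible_dec_dbl[OF i pos] dec_dec_dbl[OF i pos] i pos
    by (simp add: nth_dec del: of_nat_Suc)
  also have "\<dots> = (\<lambda>x. of_nat (2 * sum_list n - 1) *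
      oint x0 x (\<lambda>s. r i s * u0 s ^ 2 * Xt x0 p r u0 (dbl (dec n i)) s))"
    using s1 by (simp only: Xt_def sd) (simp add: Suc_diff_Suc numeral_2_eq_2 del: of_nat_Suc)
  finally show ?thesis .
qed

lemma Xf_dbl:
  "Xf x0 p r u0 (dbl n) = (\<lambda>x. of_nat (2 * sum_list n + 1) *
     oint x0 x (\<lambda>s. (\<Sum>i<length n. Xf_minus x0 p r u0 (dbl n) i s) / (p s * u0 s ^ 2)))"
proof (cases "sum_list n = 0")
  case True
  then have "dbl n ! k = 0" if "k < length n" for k
    using elem_le_sum_list[OF that] that by simp
  then have inner: "(\<Sum>i<length n. Xf_minus x0 p r u0 (dbl n) i s) = (\<Sum>i<length (dbl n). 1 / of_nat (length (dbl n)))" for s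
    by (intro sum.cong) (auto simp: Xf_minus_def)
  have "Xf x0 p r u0 (dbl n) = XL x0 p r u0 0 (dbl n)"
    unfolding Xf_def sum_list_dbl True by simp
  then show ?thesis
    unfolding True XL.simps by (simp only: inner) simp
next
  case False
  obtain k where k: "2 * sum_list n = Suc k" using False by (cases "2 * sum_list n") auto
  have odd: "\<not> even (Suc k + 1)" using k by presburger
  have nz: "\<not> (\<forall>k<length (dbl n). dbl n ! k = 0)"
    using False by (auto simp: sum_list_eq_0_iff in_set_conv_nth)
  have inner: "(\<Sum>i<length (dbl n). if 0 < dbl n ! i then XL x0 p r u0 k (dec (dbl n) i) s else 0)
     = (\<Sum>i<length n. Xf_minus x0 p r u0 (dbl n) i s)" for s
    by (rule sum.cong) (use k nz in \<open>auto simp: Xf_minus_def Xf_def sum_list_dec\<close>)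
  have "Xf x0 p r u0 (dbl n) = XL x0 p r u0 (Suc k) (dbl n)"
    by (simp add: Xf_def k)
  also have "\<dots> = (\<lambda>x. of_nat (Suc k + 1) * oint x0 x (\<lambda>s. (\<Sum>i<length (dbl n). if 0 < dbl n ! i
      then XL x0 p r u0 k (dec (dbl n) i) s else 0) / (p s * u0 s ^ 2)))"
    using odd admissible_dbl[of n] by (simp del: of_nat_Suc length_dbl of_nat_add)
  finally show ?thesis
    by (simp only: inner k)
qed

lemma Xf_minus_dbl:
  assumes i: "i < length n" and pos: "0 < n ! i"
  shows "Xf_minus x0 p r u0 (dbl n) i = (\<lambda>x. of_nat (2 * sum_list n) *
     oint x0 x (\<lambda>s. r i s * u0 s ^ 2 * Xf x0 p r u0 (dbl (dec n i)) s))"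
proof -
  have s1: "1 \<le> sum_list n" using elem_le_sum_list[OF i] pos by simp
  have sj: "sum_list (dec (dbl n) i) = Suc (2 * sum_list n - 2)"
    using sum_list_dec[of i "dbl n"] i pos s1 by simp
  have ev: "even (Suc (2 * sum_list n - 2) + 1)" using s1 by presburger
  have sd: "sum_list (dbl (dec n i)) = 2 * sum_list n - 2"
    using sum_list_dec[OF i pos] by simp
  have "Xf_minus x0 p r u0 (dbl n) i = XL x0 p r u0 (Suc (2 * sum_list n - 2)) (dec (dbl n) i)"
    using i pos by (simp add: Xf_minus_def Xf_def sj)
  also have "\<dots> = (\<lambda>x. of_nat (Suc (2 * sum_list n - 2) + 1) *
      oint x0 x (\<lambda>s. r i s * u0 s ^ 2 * XL x0 p r u0 (2 * sum_list n - 2) (dbl (dec n i)) s))"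
    using ev admissible_dec_dbl[OF i pos] dec_dec_dbl[OF i pos] i pos
    by (simp add: nth_dec del: of_nat_Suc of_nat_add)
  also have "\<dots> = (\<lambda>x. of_nat (2 * sum_list n) *
      oint x0 x (\<lambda>s. r i s * u0 s ^ 2 * Xf x0 p r u0 (dbl (dec n i)) s))"
    using s1 by (simp only: Xf_def sd) (simp add: Suc_diff_Suc numeral_2_eq_2 del: of_nat_Suc)
  finally show ?thesis .
qed

section \<open>Growth of the formal powers\<close>

locale formal_power_setting =
  fixes d :: nat and x0 x1 x2 :: real and p q u0 u0' :: "real \<Rightarrow> complex"
    and r :: "nat \<Rightarrow> real \<Rightarrow> complex"
  assumes d_ge_1: "d \<ge> 1" and x1_less_x2: "x1 < x2" and x0_in: "x0 \<in> {x1..x2}"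
    and continuous_p: "continuous_on {x1..x2} p"
    and continuous_r: "\<And>i. i < d \<Longrightarrow> continuous_on {x1..x2} (r i)"
    and p_nonzero: "\<And>x. x \<in> {x1..x2} \<Longrightarrow> p x \<noteq> 0"
    and u0_solution: "ode_sol {x1..x2} p q (\<lambda>_. 0) u0 u0'"
    and u0_nonzero: "\<And>x. x \<in> {x1..x2} \<Longrightarrow> u0 x \<noteq> 0"
begin

lemma u0_has_derivative: "x \<in> {x1..x2} \<Longrightarrow> (u0 has_vector_derivative u0' x) (at x within {x1..x2})"
  using u0_solution by (simp add: ode_sol_def)

lemma pu0'_has_derivative:
  "x \<in> {x1..x2} \<Longrightarrow> ((\<lambda>t. p t * u0' t) has_vector_derivative - q x * u0 x) (at x within {x1..x2})"
  using u0_solution by (simp add: ode_sol_def)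

lemma continuous_u0: "continuous_on {x1..x2} u0"
  by (rule continuous_on_vector_derivative) (rule u0_has_derivative)

lemma continuous_inverse_pu0: "continuous_on {x1..x2} (\<lambda>s. 1 / (p s * u0 s ^ 2))"
  using p_nonzero u0_nonzero by (intro continuous_intros continuous_p continuous_u0) auto

lemma continuous_ru0: "i < d \<Longrightarrow> continuous_on {x1..x2} (\<lambda>s. r i s * u0 s ^ 2)"
  by (intro continuous_intros continuous_r continuous_u0)

lemma coeff_bound_exists:
  "\<exists>K. K \<ge> 1 \<and> (\<forall>s\<in>{x1..x2}. norm (1 / (p s * u0 s ^ 2)) \<le> K) \<and>
     (\<forall>i<d. \<forall>s\<in>{x1..x2}. norm (r i s * u0 s ^ 2) \<le> K)"
proof -
  have bounded: "\<exists>B. \<forall>s\<in>{x1..x2}. norm (f s) \<le> B" if "continuous_on {x1..x2} f" for f :: "real \<Rightarrow> complex"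
    using compact_continuous_image[OF that compact_Icc] by (auto dest!: compact_imp_bounded simp: bounded_iff)
  obtain B0 where B0: "\<forall>s\<in>{x1..x2}. norm (1 / (p s * u0 s ^ 2)) \<le> B0"
    using bounded[OF continuous_inverse_pu0] by blast
  obtain B where B: "\<And>i. i < d \<Longrightarrow> \<forall>s\<in>{x1..x2}. norm (r i s * u0 s ^ 2) \<le> B i"
    using bounded[OF continuous_ru0] by metis
  have "\<bar>B i\<bar> \<le> (\<Sum>i<d. \<bar>B i\<bar>)" if "i < d" for i
    using that by (intro member_le_sum) auto
  moreover have "0 \<le> (\<Sum>i<d. \<bar>B i\<bar>)" by (intro sum_nonneg) auto
  ultimately show ?thesis using B0 B
    by (intro exI[of _ "1 + \<bar>B0\<bar> + (\<Sum>i<d. \<bar>B i\<bar>)"]) force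
qed

definition coeff_bound :: real where
  "coeff_bound = (SOME K. K \<ge> 1 \<and> (\<forall>s\<in>{x1..x2}. norm (1 / (p s * u0 s ^ 2)) \<le> K) \<and>
     (\<forall>i<d. \<forall>s\<in>{x1..x2}. norm (r i s * u0 s ^ 2) \<le> K))"

lemma coeff_bound:
  "coeff_bound \<ge> 1" "\<And>s. s \<in> {x1..x2} \<Longrightarrow> norm (1 / (p s * u0 s ^ 2)) \<le> coeff_bound"
  "\<And>i s. i < d \<Longrightarrow> s \<in> {x1..x2} \<Longrightarrow> norm (r i s * u0 s ^ 2) \<le> coeff_bound"
  using someI_ex[OF coeff_bound_exists] unfolding coeff_bound_def[symmetric] by auto

definition dominated :: "nat \<Rightarrow> (real \<Rightarrow> complex) \<Rightarrow> bool" where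
  "dominated k f \<longleftrightarrow> continuous_on {x1..x2} f \<and>
     (\<forall>x\<in>{x1..x2}. norm (f x) \<le> (d * coeff_bound * \<bar>x - x0\<bar>) ^ k)"

lemma dominated_zero [simp]: "dominated k (\<lambda>_. 0)"
  using coeff_bound(1) by (simp add: dominated_def)

lemma dominated_if: "(c \<Longrightarrow> dominated k f) \<Longrightarrow> dominated k (\<lambda>x. if c then f x else 0)"
  by (cases c) auto

lemma dominated_oint:
  assumes "continuous_on {x1..x2} h"
    and "\<And>s. s \<in> {x1..x2} \<Longrightarrow> norm (h s) \<le> (d * coeff_bound) ^ Suc k * \<bar>s - x0\<bar> ^ k"
  shows "dominated (Suc k) (\<lambda>x. of_nat (Suc k) * oint x0 x h)"
  unfolding dominated_def
proof (intro conjI ballI)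
  show "continuous_on {x1..x2} (\<lambda>x. of_nat (Suc k) * oint x0 x h)"
    using assms(1) x0_in by (intro continuous_intros continuous_on_oint)
  fix x assume x: "x \<in> {x1..x2}"
  have "norm (oint x0 x h) \<le> (d * coeff_bound) ^ Suc k * \<bar>x - x0\<bar> ^ Suc k / Suc k"
    by (rule norm_oint_le_power[OF assms(1) x0_in x assms(2)])
  then show "norm (of_nat (Suc k) * oint x0 x h) \<le> (d * coeff_bound * \<bar>x - x0\<bar>) ^ Suc k"
    by (simp add: norm_mult field_simps power_mult_distrib del: of_nat_Suc)
qed

lemma dominated_oint_r:
  assumes i: "i < d" and g: "dominated k g"
  shows "dominated (Suc k) (\<lambda>x. of_nat (Suc k) * oint x0 x (\<lambda>s. r i s * u0 s ^ 2 * g s))"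
proof (rule dominated_oint)
  show "continuous_on {x1..x2} (\<lambda>s. r i s * u0 s ^ 2 * g s)"
    using g by (intro continuous_on_mult continuous_ru0 i) (auto simp: dominated_def)
  fix s assume s: "s \<in> {x1..x2}"
  have "norm (r i s * u0 s ^ 2 * g s) \<le> coeff_bound * (d * coeff_bound * \<bar>s - x0\<bar>) ^ k"
    unfolding norm_mult[of "r i s * u0 s ^ 2"] using coeff_bound(1) coeff_bound(3)[OF i s] g s
    by (intro mult_mono) (auto simp: dominated_def)
  also have "\<dots> \<le> (d * coeff_bound) * (d * coeff_bound * \<bar>s - x0\<bar>) ^ k"
    using coeff_bound(1) d_ge_1 by (intro mult_right_mono) auto
  finally show "norm (r i s * u0 s ^ 2 * g s) \<le> (d * coeff_bound) ^ Suc k * \<bar>s - x0\<bar> ^ k"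
    by (simp add: power_mult_distrib mult_ac)
qed

lemma dominated_oint_p:
  assumes g: "\<And>i. i < d \<Longrightarrow> dominated k (g i)"
  shows "dominated (Suc k) (\<lambda>x. of_nat (Suc k) * oint x0 x (\<lambda>s. (\<Sum>i<d. g i s) / (p s * u0 s ^ 2)))"
proof (rule dominated_oint)
  show "continuous_on {x1..x2} (\<lambda>s. (\<Sum>i<d. g i s) / (p s * u0 s ^ 2))"
    using g p_nonzero u0_nonzero
    by (intro continuous_intros continuous_p continuous_u0) (auto simp: dominated_def)
  fix s assume s: "s \<in> {x1..x2}"
  have "norm (\<Sum>i<d. g i s) \<le> (\<Sum>i<d. (d * coeff_bound * \<bar>s - x0\<bar>) ^ k)"
    using g s by (intro sum_norm_le) (auto simp: dominated_def)
  then have "norm ((\<Sum>i<d. g i s) * (1 / (p s * u0 s ^ 2))) \<le> (d * (d * coeff_bound * \<bar>s - x0\<bar>) ^ k) * coeff_bound"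
    unfolding norm_mult using coeff_bound(2)[OF s] coeff_bound(1) by (intro mult_mono) auto
  then show "norm ((\<Sum>i<d. g i s) / (p s * u0 s ^ 2)) \<le> (d * coeff_bound) ^ Suc k * \<bar>s - x0\<bar> ^ k"
    by (simp add: power_mult_distrib mult_ac)
qed

lemma dominated_XtL: "length j = d \<Longrightarrow> sum_list j = n \<Longrightarrow> dominated n (XtL x0 p r u0 n j)"
proof (induction n arbitrary: j)
  case 0
  then show ?case by (simp add: dominated_def)
next
  case (Suc n)
  have IH: "dominated n (\<lambda>s. if 0 < j ! i then XtL x0 p r u0 n (dec j i) s else 0)" if "i < d" for i
    using Suc.prems that by (intro dominated_if Suc.IH) (auto simp: sum_list_dec)
  show ?case
  proof (cases "admissible j")
    case False
    then show ?thesis by simp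
  next
    case adm: True
    show ?thesis
    proof (cases "odd (Suc n)")
      case True
      then have i: "odd_idx j < d" using odd_idx_less[OF adm] Suc.prems by simp
      show ?thesis using adm True dominated_oint_r[OF i IH[OF i]] by (simp add: Let_def del: of_nat_Suc)
    next
      case False
      then show ?thesis using adm dominated_oint_p[OF IH] Suc.prems by (simp del: of_nat_Suc)
    qed
  qed
qed

lemma dominated_XL: "length m = d \<Longrightarrow> sum_list m = n \<Longrightarrow> dominated (Suc n) (XL x0 p r u0 n m)"
proof (induction n arbitrary: m)
  case 0
  have "dominated 0 (\<lambda>_. 1 / of_nat d)"
    using d_ge_1 by (auto simp: dominated_def norm_divide)
  from dominated_oint_p[OF this] show ?case
    using 0 by simp
next
  case (Suc n)
  have IH: "dominated (Suc n) (\<lambda>s. if 0 < m ! i then XL x0 p r u0 n (dec m i) s else 0)" if "i < d" for i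
    using Suc.prems that by (intro dominated_if Suc.IH) (auto simp: sum_list_dec)
  show ?case
  proof (cases "admissible m")
    case False
    then show ?thesis by simp
  next
    case adm: True
    show ?thesis
    proof (cases "even (Suc n + 1)")
      case True
      then have i: "odd_idx m < d" using odd_idx_less[OF adm] Suc.prems by simp
      show ?thesis using adm True dominated_oint_r[OF i IH[OF i]] by (simp add: Let_def del: of_nat_Suc)
    next
      case False
      then show ?thesis using adm dominated_oint_p[OF IH] Suc.prems by (simp del: of_nat_Suc)
    qed
  qed
qed

lemma has_vector_derivative_scaled_oint:
  assumes "continuous_on {x1..x2} \<phi>" "x \<in> {x1..x2}"
  shows "((\<lambda>x. a * oint x0 x \<phi> * b) has_vector_derivative a * \<phi> x * b) (at x within {x1..x2})"
  by (intro has_vector_derivative_mult_left has_vector_derivative_mult_right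
      has_vector_derivative_oint assms x0_in)

lemma continuous_Xt: "length j = d \<Longrightarrow> continuous_on {x1..x2} (Xt x0 p r u0 j)"
  using dominated_XtL[of j] by (simp add: Xt_def dominated_def)

lemma continuous_Xf: "length m = d \<Longrightarrow> continuous_on {x1..x2} (Xf x0 p r u0 m)"
  using dominated_XL[of m] by (simp add: Xf_def dominated_def)

lemma has_vector_derivative_Xt_minus_dbl:
  assumes n: "length n = d" and i: "i < d" and x: "x \<in> {x1..x2}"
  shows "(Xt_minus x0 p r u0 (dbl n) i has_vector_derivative
      (if 0 < n ! i then of_nat (2 * sum_list n - 1) * (r i x * u0 x ^ 2 * Xt x0 p r u0 (dbl (dec n i)) x) else 0))
      (at x within {x1..x2})"
proof (cases "0 < n ! i")
  case True
  have "continuous_on {x1..x2} (\<lambda>s. r i s * u0 s ^ 2 * Xt x0 p r u0 (dbl (dec n i)) s)"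
    using n by (intro continuous_on_mult continuous_ru0 i continuous_Xt) simp
  from has_vector_derivative_scaled_oint[OF this x, of "of_nat (2 * sum_list n - 1)" 1]
  show ?thesis
    using True n i by (simp add: Xt_minus_dbl del: of_nat_diff)
qed (use n i in \<open>simp add: Xt_minus_def\<close>)

lemma has_vector_derivative_Xf_minus_dbl:
  assumes n: "length n = d" and i: "i < d" and x: "x \<in> {x1..x2}"
  shows "(Xf_minus x0 p r u0 (dbl n) i has_vector_derivative
      (if 0 < n ! i then of_nat (2 * sum_list n) * (r i x * u0 x ^ 2 * Xf x0 p r u0 (dbl (dec n i)) x) else 0))
      (at x within {x1..x2})"
proof (cases "0 < n ! i")
  case True
  have "continuous_on {x1..x2} (\<lambda>s. r i s * u0 s ^ 2 * Xf x0 p r u0 (dbl (dec n i)) s)"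
    using n by (intro continuous_on_mult continuous_ru0 i continuous_Xf) simp
  from has_vector_derivative_scaled_oint[OF this x, of "of_nat (2 * sum_list n)" 1]
  show ?thesis
    using True n i by (simp add: Xf_minus_dbl del: of_nat_mult)
qed (use n i in \<open>simp add: Xf_minus_def\<close>)

section \<open>Reduction to a first-order system\<close>

lemma ode_sol_of_first_order_system:
  assumes S: "\<And>x. x \<in> {x1..x2} \<Longrightarrow> (S has_vector_derivative T x / (p x * u0 x ^ 2)) (at x within {x1..x2})"
    and T: "\<And>x. x \<in> {x1..x2} \<Longrightarrow> (T has_vector_derivative w x * u0 x ^ 2 * S x) (at x within {x1..x2})"
  shows "ode_sol {x1..x2} p q w (\<lambda>x. u0 x * S x) (\<lambda>x. u0' x / u0 x * (u0 x * S x) + T x / (p x * u0 x))"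
  unfolding ode_sol_def
proof (intro conjI ballI)
  fix x assume x: "x \<in> {x1..x2}"
  note nz = p_nonzero[OF x] u0_nonzero[OF x]
  have "((\<lambda>x. u0 x * S x) has_vector_derivative u0 x * (T x / (p x * u0 x ^ 2)) + u0' x * S x) (at x within {x1..x2})"
    by (rule has_vector_derivative_mult[OF u0_has_derivative[OF x] S[OF x]])
  then show "((\<lambda>x. u0 x * S x) has_vector_derivative u0' x / u0 x * (u0 x * S x) + T x / (p x * u0 x)) (at x within {x1..x2})"
    using nz by (simp add: field_simps power2_eq_square)
  have inverse_u0: "((\<lambda>t. inverse (u0 t)) has_vector_derivative u0' x * - (inverse (u0 x) ^ 2)) (at x within {x1..x2})"
    using field_vector_diff_chain_within[OF u0_has_derivative[OF x] DERIV_inverse[OF u0_nonzero[OF x]]]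
    by (simp add: comp_def has_field_derivative_at_within power2_eq_square)
  \<comment> \<open>On the interval, \<open>p (u0 S)' = (p u0') S + T / u0\<close>.\<close>
  have "((\<lambda>t. (p t * u0' t) * S t + T t * inverse (u0 t)) has_vector_derivative
      (p x * u0' x) * (T x / (p x * u0 x ^ 2)) + (- q x * u0 x) * S x
      + (T x * (u0' x * - (inverse (u0 x) ^ 2)) + (w x * u0 x ^ 2 * S x) * inverse (u0 x))) (at x within {x1..x2})"
    by (intro has_vector_derivative_add has_vector_derivative_mult pu0'_has_derivative[OF x] S[OF x] T[OF x] inverse_u0)
  moreover have "(p x * u0' x) * (T x / (p x * u0 x ^ 2)) + (- q x * u0 x) * S x
      + (T x * (u0' x * - (inverse (u0 x) ^ 2)) + (w x * u0 x ^ 2 * S x) * inverse (u0 x))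
      = (w x - q x) * (u0 x * S x)"
    using nz by (simp add: field_simps power2_eq_square)
  ultimately have "((\<lambda>t. (p t * u0' t) * S t + T t * inverse (u0 t)) has_vector_derivative (w x - q x) * (u0 x * S x))
      (at x within {x1..x2})"
    by simp
  then show "((\<lambda>t. p t * (u0' t / u0 t * (u0 t * S t) + T t / (p t * u0 t))) has_vector_derivative
      (w x - q x) * (u0 x * S x)) (at x within {x1..x2})"
    by (rule has_vector_derivative_transform[OF x, rotated])
       (use p_nonzero u0_nonzero in \<open>simp add: field_simps\<close>)
qed

end

section \<open>The power series in the spectral parameter\<close>

locale formal_power_series = formal_power_setting +
  fixes lam :: "nat \<Rightarrow> complex"
begin

definition growth :: real where
  "growth = 1 + d * coeff_bound * (x2 - x1)"

definition lam_bound :: real where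
  "lam_bound = 1 + (\<Sum>i<d. norm (lam i))"

definition majorant :: "nat list \<Rightarrow> real" where
  "majorant n = (lam_bound * growth ^ 2) ^ sum_list n / fact (sum_list n)"

lemma growth_ge_1: "growth \<ge> 1"
  using coeff_bound(1) x1_less_x2 by (simp add: growth_def)

lemma lam_bound_ge_1: "lam_bound \<ge> 1"
  by (simp add: lam_bound_def sum_nonneg)

lemma norm_lam_le: "i < d \<Longrightarrow> norm (lam i) \<le> lam_bound"
  unfolding lam_bound_def using member_le_sum[of i "{..<d}" "\<lambda>i. norm (lam i)"] by simp

lemma summable_majorant: "majorant summable_on {n. length n = d}"
  unfolding majorant_def using growth_ge_1 lam_bound_ge_1
  by (intro summable_on_power_fact_sum_list) simp

lemma dominated_le_growth:
  assumes f: "dominated k f" and x: "x \<in> {x1..x2}"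
  shows "norm (f x) \<le> growth ^ k"
proof -
  have "norm (f x) \<le> (d * coeff_bound * \<bar>x - x0\<bar>) ^ k"
    using f x by (simp add: dominated_def)
  also have "\<dots> \<le> growth ^ k"
  proof (rule power_mono)
    have "d * coeff_bound * \<bar>x - x0\<bar> \<le> d * coeff_bound * (x2 - x1)"
      using x x0_in coeff_bound(1) by (intro mult_left_mono) auto
    then show "d * coeff_bound * \<bar>x - x0\<bar> \<le> growth"
      by (simp add: growth_def)
  qed (use coeff_bound(1) in simp)
  finally show ?thesis .
qed

lemma norm_Xt_le: "length j = d \<Longrightarrow> x \<in> {x1..x2} \<Longrightarrow> norm (Xt x0 p r u0 j x) \<le> growth ^ sum_list j"
  unfolding Xt_def by (intro dominated_le_growth dominated_XtL) auto

lemma norm_Xf_le: "length m = d \<Longrightarrow> x \<in> {x1..x2} \<Longrightarrow> norm (Xf x0 p r u0 m x) \<le> growth * growth ^ sum_list m"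
  unfolding Xf_def using dominated_le_growth[OF dominated_XL] by fastforce

lemma norm_Xt_minus_le:
  assumes "length n = d" "i < d" "x \<in> {x1..x2}"
  shows "norm (Xt_minus x0 p r u0 (dbl n) i x) \<le> growth ^ (2 * sum_list n)"
proof (cases "0 < n ! i")
  case True
  then have "norm (Xt_minus x0 p r u0 (dbl n) i x) \<le> growth ^ sum_list (dec (dbl n) i)"
    using assms by (simp add: Xt_minus_def norm_Xt_le)
  also have "\<dots> \<le> growth ^ (2 * sum_list n)"
    using True assms growth_ge_1 by (intro power_increasing) (auto simp: sum_list_dec)
  finally show ?thesis .
qed (use assms growth_ge_1 in \<open>simp add: Xt_minus_def\<close>)

lemma norm_Xf_minus_le:
  assumes "length n = d" "i < d" "x \<in> {x1..x2}"
  shows "norm (Xf_minus x0 p r u0 (dbl n) i x) \<le> growth ^ (2 * sum_list n)"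
proof (cases "0 < n ! i")
  case True
  then have "norm (Xf_minus x0 p r u0 (dbl n) i x) \<le> growth * growth ^ sum_list (dec (dbl n) i)"
    using assms by (simp add: Xf_minus_def norm_Xf_le)
  also have "\<dots> = growth ^ (2 * sum_list n)"
    using True assms elem_le_sum_list[of i n] by (simp add: sum_list_dec flip: power_Suc)
  finally show ?thesis .
next
  case False
  have "norm (1 / of_nat d :: complex) \<le> 1"
    using d_ge_1 by (simp add: norm_divide)
  also have "1 \<le> growth ^ (2 * sum_list n)"
    using growth_ge_1 by simp
  finally show ?thesis
    using False assms growth_ge_1 by (simp add: Xf_minus_def)
qed

lemma norm_lampow_le_lam_bound: "length n = d \<Longrightarrow> norm (lampow lam n) \<le> lam_bound ^ sum_list n"
  by (intro norm_lampow_le norm_lam_le) simp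

lemma norm_term_le_majorant:
  assumes "length n = d" "norm X \<le> c * growth ^ (2 * sum_list n)" "fact (sum_list n) \<le> (fact k :: real)"
  shows "norm (X * lampow lam n / fact k) \<le> c * majorant n"
proof -
  have c: "c \<ge> 0"
    using assms(2) growth_ge_1 by (smt (verit) norm_ge_zero zero_le_mult_iff zero_less_power)
  have "norm (X * lampow lam n / fact k) \<le> c * growth ^ (2 * sum_list n) * lam_bound ^ sum_list n / fact k"
    unfolding norm_mult norm_divide norm_fact
    using assms(2) norm_lampow_le_lam_bound[OF assms(1)] c growth_ge_1
    by (intro divide_right_mono mult_mono) auto
  also have "\<dots> \<le> c * growth ^ (2 * sum_list n) * lam_bound ^ sum_list n / fact (sum_list n)"
    using assms(3) c growth_ge_1 lam_bound_ge_1 by (intro divide_left_mono) auto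
  also have "\<dots> = c * majorant n"
    by (simp add: majorant_def power_mult_distrib mult_ac flip: power_mult)
  finally show ?thesis .
qed

text \<open>The factor \<open>1\<close> keeps the shape \<open>c * majorant n\<close> required by \<open>ode_sol_series\<close> below.\<close>

lemma
  assumes n: "length n = d" and x: "x \<in> {x1..x2}"
  shows norm_ta1_le: "norm (ta1 x0 p r u0 lam n x) \<le> 1 * majorant n"
    and norm_ta2_le: "norm (ta2 x0 p r u0 lam n x) \<le> growth * majorant n"
    and norm_tb1_le: "norm (tb1 x0 p r u0 lam n x) \<le> d * majorant n"
    and norm_tb2_le: "norm (tb2 x0 p r u0 lam n x) \<le> d * majorant n"
proof -
  have fact_le: "fact (sum_list n) \<le> (fact k :: real)" if "sum_list n \<le> k" for k
    using that by (rule fact_mono)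
  show "norm (ta1 x0 p r u0 lam n x) \<le> 1 * majorant n"
    unfolding ta1_def using n x norm_Xt_le[of "dbl n" x]
    by (intro norm_term_le_majorant fact_le) auto
  show "norm (ta2 x0 p r u0 lam n x) \<le> growth * majorant n"
    unfolding ta2_def using n x norm_Xf_le[of "dbl n" x]
    by (intro norm_term_le_majorant fact_le) auto
  have "fact (sum_list n) \<le> (fact (2 * sum_list n - 1) :: real)"
    by (cases "sum_list n = 0") (simp_all add: fact_le)
  moreover have "norm (\<Sum>i<d. Xt_minus x0 p r u0 (dbl n) i x) \<le> d * growth ^ (2 * sum_list n)"
    using sum_norm_bound[of "{..<d}" "\<lambda>i. Xt_minus x0 p r u0 (dbl n) i x"] norm_Xt_minus_le[OF n _ x]
    by simp
  ultimately show "norm (tb1 x0 p r u0 lam n x) \<le> d * majorant n"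
    unfolding tb1_def n by (intro norm_term_le_majorant n)
  have "norm (\<Sum>i<d. Xf_minus x0 p r u0 (dbl n) i x) \<le> d * growth ^ (2 * sum_list n)"
    using sum_norm_bound[of "{..<d}" "\<lambda>i. Xf_minus x0 p r u0 (dbl n) i x"] norm_Xf_minus_le[OF n _ x]
    by simp
  then show "norm (tb2 x0 p r u0 lam n x) \<le> d * majorant n"
    unfolding tb2_def n by (intro norm_term_le_majorant n fact_le) auto
qed

lemma has_vector_derivative_ta1:
  assumes n: "length n = d" and x: "x \<in> {x1..x2}"
  shows "(ta1 x0 p r u0 lam n has_vector_derivative tb1 x0 p r u0 lam n x / (p x * u0 x ^ 2))
      (at x within {x1..x2})"
proof (cases "sum_list n = 0")
  case True
  then have zero: "n ! i = 0" if "i < d" for i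
    using elem_le_sum_list[of i n] n that by simp
  have "ta1 x0 p r u0 lam n = (\<lambda>_. lampow lam n)"
    unfolding ta1_def Xt_def sum_list_dbl True by simp
  moreover have "tb1 x0 p r u0 lam n x = 0"
    using n zero by (simp add: tb1_def Xt_minus_def)
  ultimately show ?thesis by simp
next
  case False
  then obtain t where t: "sum_list n = Suc t" by (cases "sum_list n") auto
  define \<phi> where "\<phi> s = (\<Sum>i<d. Xt_minus x0 p r u0 (dbl n) i s) / (p s * u0 s ^ 2)" for s
  have \<phi>: "continuous_on {x1..x2} \<phi>"
    unfolding \<phi>_def using n p_nonzero u0_nonzero
    by (intro continuous_intros continuous_on_vector_derivative[OF has_vector_derivative_Xt_minus_dbl]
        continuous_p continuous_u0) auto
  have expand: "ta1 x0 p r u0 lam n = (\<lambda>x. of_nat (2 * sum_list n) * oint x0 x \<phi> * (lampow lam n / fact (2 * sum_list n)))"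
    using Xt_dbl[of n x0 p r u0] False n by (simp add: fun_eq_iff ta1_def \<phi>_def[abs_def])
  have derivative_eq: "of_nat (2 * sum_list n) * \<phi> x * (lampow lam n / fact (2 * sum_list n))
      = tb1 x0 p r u0 lam n x / (p x * u0 x ^ 2)"
    using p_nonzero[OF x] u0_nonzero[OF x] n unfolding tb1_def \<phi>_def t
    by (simp add: fact_Suc field_simps del: of_nat_Suc)
  have "(ta1 x0 p r u0 lam n has_vector_derivative of_nat (2 * sum_list n) * \<phi> x * (lampow lam n / fact (2 * sum_list n)))
      (at x within {x1..x2})"
    unfolding expand by (rule has_vector_derivative_scaled_oint[OF \<phi> x])
  then show ?thesis
    unfolding derivative_eq .
qed

lemma has_vector_derivative_ta2:
  assumes n: "length n = d" and x: "x \<in> {x1..x2}"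
  shows "(ta2 x0 p r u0 lam n has_vector_derivative tb2 x0 p r u0 lam n x / (p x * u0 x ^ 2))
      (at x within {x1..x2})"
proof -
  define \<phi> where "\<phi> s = (\<Sum>i<d. Xf_minus x0 p r u0 (dbl n) i s) / (p s * u0 s ^ 2)" for s
  have \<phi>: "continuous_on {x1..x2} \<phi>"
    unfolding \<phi>_def using n p_nonzero u0_nonzero
    by (intro continuous_intros continuous_on_vector_derivative[OF has_vector_derivative_Xf_minus_dbl]
        continuous_p continuous_u0) auto
  have expand: "ta2 x0 p r u0 lam n = (\<lambda>x. of_nat (2 * sum_list n + 1) * oint x0 x \<phi> * (lampow lam n / fact (2 * sum_list n + 1)))"
    using Xf_dbl[where n = n] n by (simp add: fun_eq_iff ta2_def \<phi>_def[abs_def])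
  have derivative_eq: "of_nat (2 * sum_list n + 1) * \<phi> x * (lampow lam n / fact (2 * sum_list n + 1))
      = tb2 x0 p r u0 lam n x / (p x * u0 x ^ 2)"
    using p_nonzero[OF x] u0_nonzero[OF x] n unfolding tb2_def \<phi>_def
    by (simp add: fact_Suc field_simps del: of_nat_Suc)
  have "(ta2 x0 p r u0 lam n has_vector_derivative of_nat (2 * sum_list n + 1) * \<phi> x * (lampow lam n / fact (2 * sum_list n + 1)))
      (at x within {x1..x2})"
    unfolding expand by (rule has_vector_derivative_scaled_oint[OF \<phi> x])
  then show ?thesis
    unfolding derivative_eq .
qed

lemma has_vector_derivative_tb1:
  assumes n: "length n = d" and x: "x \<in> {x1..x2}"
  shows "(tb1 x0 p r u0 lam n has_vector_derivative
      (\<Sum>i<d. if 0 < n ! i then lam i * r i x * u0 x ^ 2 * ta1 x0 p r u0 lam (dec n i) x else 0))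
      (at x within {x1..x2})"
proof -
  let ?c = "lampow lam n / fact (2 * sum_list n - 1)"
  let ?D = "\<lambda>i. if 0 < n ! i then of_nat (2 * sum_list n - 1) * (r i x * u0 x ^ 2 * Xt x0 p r u0 (dbl (dec n i)) x) else 0"
  have "(tb1 x0 p r u0 lam n has_vector_derivative (\<Sum>i<d. ?D i * ?c)) (at x within {x1..x2})"
  proof -
    have "tb1 x0 p r u0 lam n = (\<lambda>x. \<Sum>i<d. Xt_minus x0 p r u0 (dbl n) i x * ?c)"
      unfolding tb1_def n by (simp add: fun_eq_iff sum_distrib_right sum_divide_distrib)
    then show ?thesis
      by (simp only:) (intro has_vector_derivative_sum has_vector_derivative_mult_left
          has_vector_derivative_Xt_minus_dbl n x, simp)
  qed
  moreover have "(\<Sum>i<d. ?D i * ?c) = (\<Sum>i<d. if 0 < n ! i then lam i * r i x * u0 x ^ 2 * ta1 x0 p r u0 lam (dec n i) x else 0)"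
  proof (rule sum.cong[OF refl])
    fix i assume "i \<in> {..<d}"
    then have i: "i < d" by simp
    show "?D i * ?c = (if 0 < n ! i then lam i * r i x * u0 x ^ 2 * ta1 x0 p r u0 lam (dec n i) x else 0)"
    proof (cases "0 < n ! i")
      case True
      obtain t where t: "sum_list n = Suc t"
        using elem_le_sum_list[of i n] n i True by (cases "sum_list n") auto
      have "sum_list (dec n i) = t" "2 * sum_list n - 1 = Suc (2 * t)"
        using sum_list_dec[of i n] n i True t by simp_all
      then show ?thesis
        using True lampow_dec[of i n lam] n i unfolding ta1_def
        by (simp add: fact_Suc field_simps del: of_nat_Suc)
    qed simp
  qed
  ultimately show ?thesis
    by simp
qed

lemma has_vector_derivative_tb2:
  assumes n: "length n = d" and x: "x \<in> {x1..x2}"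
  shows "(tb2 x0 p r u0 lam n has_vector_derivative
      (\<Sum>i<d. if 0 < n ! i then lam i * r i x * u0 x ^ 2 * ta2 x0 p r u0 lam (dec n i) x else 0))
      (at x within {x1..x2})"
proof -
  let ?c = "lampow lam n / fact (2 * sum_list n)"
  let ?D = "\<lambda>i. if 0 < n ! i then of_nat (2 * sum_list n) * (r i x * u0 x ^ 2 * Xf x0 p r u0 (dbl (dec n i)) x) else 0"
  have "(tb2 x0 p r u0 lam n has_vector_derivative (\<Sum>i<d. ?D i * ?c)) (at x within {x1..x2})"
  proof -
    have "tb2 x0 p r u0 lam n = (\<lambda>x. \<Sum>i<d. Xf_minus x0 p r u0 (dbl n) i x * ?c)"
      unfolding tb2_def n by (simp add: fun_eq_iff sum_distrib_right sum_divide_distrib)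
    then show ?thesis
      by (simp only:) (intro has_vector_derivative_sum has_vector_derivative_mult_left
          has_vector_derivative_Xf_minus_dbl n x, simp)
  qed
  moreover have "(\<Sum>i<d. ?D i * ?c) = (\<Sum>i<d. if 0 < n ! i then lam i * r i x * u0 x ^ 2 * ta2 x0 p r u0 lam (dec n i) x else 0)"
  proof (rule sum.cong[OF refl])
    fix i assume "i \<in> {..<d}"
    then have i: "i < d" by simp
    show "?D i * ?c = (if 0 < n ! i then lam i * r i x * u0 x ^ 2 * ta2 x0 p r u0 lam (dec n i) x else 0)"
    proof (cases "0 < n ! i")
      case True
      obtain t where t: "sum_list n = Suc t"
        using elem_le_sum_list[of i n] n i True by (cases "sum_list n") auto
      have "sum_list (dec n i) = t" "2 * sum_list n = Suc (Suc (2 * t))"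
        using sum_list_dec[of i n] n i True t by simp_all
      then show ?thesis
        using True lampow_dec[of i n lam] n i unfolding ta2_def
        by (simp add: fact_Suc field_simps del: of_nat_Suc)
    qed simp
  qed
  ultimately show ?thesis
    by simp
qed

definition weight :: "real \<Rightarrow> complex" where
  "weight x = (\<Sum>i<d. lam i * r i x)"

lemma uniform_limit_majorant:
  fixes f :: "nat list \<Rightarrow> real \<Rightarrow> complex"
  assumes "B \<subseteq> {n. length n = d}" "\<And>n x. n \<in> B \<Longrightarrow> x \<in> {x1..x2} \<Longrightarrow> norm (f n x) \<le> c * majorant n"
  shows "uniform_limit {x1..x2} (\<lambda>F x. \<Sum>n\<in>F. f n x) (\<lambda>x. \<Sum>\<^sub>\<infinity>n\<in>B. f n x) (finite_subsets_at_top B)"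
  using assms(2) summable_on_subset_banach[OF summable_on_cmult_right[OF summable_majorant, where c = c] assms(1)]
  by (rule Weierstrass_m_test_general)

lemma has_sum_majorant:
  fixes f :: "nat list \<Rightarrow> real \<Rightarrow> complex"
  assumes "B \<subseteq> {n. length n = d}" "\<And>n x. n \<in> B \<Longrightarrow> x \<in> {x1..x2} \<Longrightarrow> norm (f n x) \<le> c * majorant n"
    and "x \<in> {x1..x2}"
  shows "((\<lambda>n. f n x) has_sum (\<Sum>\<^sub>\<infinity>n\<in>B. f n x)) B"
  unfolding has_sum_def by (rule tendsto_uniform_limitI[OF uniform_limit_majorant[OF assms(1,2)] assms(3)])

lemma summable_on_shifted_majorant:
  "(\<lambda>n. \<Sum>i<d. if 0 < n ! i then c * majorant (dec n i) else 0) summable_on {n. length n = d}"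
proof -
  have "((\<lambda>n. c * majorant n) has_sum c * infsum majorant {n. length n = d}) {n. length n = d}"
    by (intro has_sum_cmult_right has_sum_infsum summable_majorant)
  from has_sum_sum_shift_multi_index[OF this] show ?thesis
    by (rule has_sum_imp_summable)
qed

text \<open>
  \<open>a\<close> and \<open>b\<close> are the terms of the series for \<open>S = u / u0\<close> and \<open>T = p u0\<^sup>2 S'\<close>;
  the hypotheses are the termwise form of the first-order system.
\<close>

context
  fixes a b :: "nat list \<Rightarrow> real \<Rightarrow> complex" and ca cb :: real
  assumes a_deriv: "\<And>n x. length n = d \<Longrightarrow> x \<in> {x1..x2} \<Longrightarrow>
      (a n has_vector_derivative b n x / (p x * u0 x ^ 2)) (at x within {x1..x2})"
    and b_deriv: "\<And>n x. length n = d \<Longrightarrow> x \<in> {x1..x2} \<Longrightarrow> (b n has_vector_derivative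
      (\<Sum>i<d. if 0 < n ! i then lam i * r i x * u0 x ^ 2 * a (dec n i) x else 0)) (at x within {x1..x2})"
    and a_bound: "\<And>n x. length n = d \<Longrightarrow> x \<in> {x1..x2} \<Longrightarrow> norm (a n x) \<le> ca * majorant n"
    and b_bound: "\<And>n x. length n = d \<Longrightarrow> x \<in> {x1..x2} \<Longrightarrow> norm (b n x) \<le> cb * majorant n"
begin

lemma continuous_a: "length n = d \<Longrightarrow> continuous_on {x1..x2} (a n)"
  using a_deriv by (intro continuous_on_vector_derivative)

lemma continuous_b: "length n = d \<Longrightarrow> continuous_on {x1..x2} (b n)"
  using b_deriv by (intro continuous_on_vector_derivative)

lemma has_vector_derivative_series_a:
  assumes x: "x \<in> {x1..x2}"
  shows "((\<lambda>x. \<Sum>\<^sub>\<infinity>n\<in>{n. length n = d}. a n x) has_vector_derivative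
      (\<Sum>\<^sub>\<infinity>n\<in>{n. length n = d}. b n x) / (p x * u0 x ^ 2)) (at x within {x1..x2})"
proof (rule has_vector_derivative_has_sum[where g = "\<lambda>n x. b n x / (p x * u0 x ^ 2)"])
  fix n :: "nat list" assume n: "n \<in> {n. length n = d}"
  show "continuous_on {x1..x2} (\<lambda>x. b n x / (p x * u0 x ^ 2))"
    using n p_nonzero u0_nonzero by (intro continuous_intros continuous_b continuous_p continuous_u0) auto
  fix s assume "s \<in> {x1..x2}"
  then show "(a n has_vector_derivative b n s / (p s * u0 s ^ 2)) (at s within {x1..x2})"
    using n a_deriv by simp
next
  have "norm (b n s / (p s * u0 s ^ 2)) \<le> cb * coeff_bound * majorant n"
    if n: "n \<in> {n. length n = d}" and "s \<in> {x1..x2}" for n s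
  proof -
    note that = n[simplified] \<open>s \<in> {x1..x2}\<close>
    have "0 \<le> cb * majorant n"
      using norm_ge_zero b_bound[OF that] by (rule order_trans)
    then have "norm (b n s) * norm (1 / (p s * u0 s ^ 2)) \<le> cb * majorant n * coeff_bound"
      by (rule mult_mono[OF b_bound[OF that] coeff_bound(2)[OF that(2)] _ norm_ge_zero])
    then show ?thesis by (simp add: norm_divide mult_ac)
  qed
  moreover have "((\<lambda>n. b n s / (p s * u0 s ^ 2)) has_sum (\<Sum>\<^sub>\<infinity>n\<in>{n. length n = d}. b n s) / (p s * u0 s ^ 2))
      {n. length n = d}" if "s \<in> {x1..x2}" for s
  proof -
    have "((\<lambda>n. b n s) has_sum (\<Sum>\<^sub>\<infinity>n\<in>{n. length n = d}. b n s)) {n. length n = d}"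
      using that by (intro has_sum_majorant[where c = cb] b_bound) auto
    from has_sum_cmult_left[OF this, where c = "inverse (p s * u0 s ^ 2)"] show ?thesis
      by (simp add: divide_inverse)
  qed
  ultimately show "uniform_limit {x1..x2} (\<lambda>F s. \<Sum>n\<in>F. b n s / (p s * u0 s ^ 2))
      (\<lambda>s. (\<Sum>\<^sub>\<infinity>n\<in>{n. length n = d}. b n s) / (p s * u0 s ^ 2)) (finite_subsets_at_top {n. length n = d})"
    by (rule Weierstrass_m_test_general') (assumption | rule summable_on_cmult_right[OF summable_majorant])+
next
  fix s assume "s \<in> {x1..x2}"
  then show "((\<lambda>n. a n s) has_sum (\<Sum>\<^sub>\<infinity>n\<in>{n. length n = d}. a n s)) {n. length n = d}"
    by (intro has_sum_majorant[OF _ a_bound]) auto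
qed (use x x1_less_x2 in auto)

lemma norm_shifted_series_le:
  assumes n: "n \<in> {n. length n = d}" and s: "s \<in> {x1..x2}"
  shows "norm (\<Sum>i<d. if 0 < n ! i then lam i * r i s * u0 s ^ 2 * a (dec n i) s else 0)
    \<le> (\<Sum>i<d. if 0 < n ! i then lam_bound * coeff_bound * ca * majorant (dec n i) else 0)"
proof (rule sum_norm_le)
  fix i assume i: "i \<in> {..<d}"
  have n': "length (dec n i) = d" and i': "i < d"
    using n i by auto
  have coeff: "norm (lam i) * norm (r i s * u0 s ^ 2) \<le> lam_bound * coeff_bound"
    using norm_lam_le[OF i'] coeff_bound(3)[OF i' s] lam_bound_ge_1 by (intro mult_mono) auto
  have "0 \<le> ca * majorant (dec n i)"
    using norm_ge_zero a_bound[OF n' s] by (rule order_trans)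
  then have "norm (lam i) * norm (r i s * u0 s ^ 2) * norm (a (dec n i) s)
      \<le> lam_bound * coeff_bound * (ca * majorant (dec n i))"
    using lam_bound_ge_1 coeff_bound(1) by (intro mult_mono[OF coeff a_bound[OF n' s]]) auto
  then show "norm (if 0 < n ! i then lam i * r i s * u0 s ^ 2 * a (dec n i) s else 0)
      \<le> (if 0 < n ! i then lam_bound * coeff_bound * ca * majorant (dec n i) else 0)"
    by (simp add: norm_mult mult_ac)
qed

lemma has_sum_shifted_series:
  assumes s: "s \<in> {x1..x2}"
  shows "((\<lambda>n. \<Sum>i<d. if 0 < n ! i then lam i * r i s * u0 s ^ 2 * a (dec n i) s else 0) has_sum
      weight s * u0 s ^ 2 * (\<Sum>\<^sub>\<infinity>n\<in>{n. length n = d}. a n s)) {n. length n = d}"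
proof -
  have "((\<lambda>n. a n s) has_sum (\<Sum>\<^sub>\<infinity>n\<in>{n. length n = d}. a n s)) {n. length n = d}"
    using s by (intro has_sum_majorant[where c = ca] a_bound) auto
  then have "((\<lambda>n. \<Sum>i<d. if 0 < n ! i then lam i * r i s * u0 s ^ 2 * a (dec n i) s else 0) has_sum
      (\<Sum>i<d. lam i * r i s * u0 s ^ 2 * (\<Sum>\<^sub>\<infinity>n\<in>{n. length n = d}. a n s))) {n. length n = d}"
    by (intro has_sum_sum_shift_multi_index[where F = "\<lambda>i n. lam i * r i s * u0 s ^ 2 * a n s"]
        has_sum_cmult_right)
  moreover have "(\<Sum>i<d. lam i * r i s * u0 s ^ 2 * (\<Sum>\<^sub>\<infinity>n\<in>{n. length n = d}. a n s))
      = weight s * u0 s ^ 2 * (\<Sum>\<^sub>\<infinity>n\<in>{n. length n = d}. a n s)"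
    by (simp add: weight_def sum_distrib_right)
  ultimately show ?thesis
    by simp
qed

lemma has_vector_derivative_series_b:
  assumes x: "x \<in> {x1..x2}"
  shows "((\<lambda>x. \<Sum>\<^sub>\<infinity>n\<in>{n. length n = d}. b n x) has_vector_derivative
      weight x * u0 x ^ 2 * (\<Sum>\<^sub>\<infinity>n\<in>{n. length n = d}. a n x)) (at x within {x1..x2})"
proof (rule has_vector_derivative_has_sum[where
      g = "\<lambda>n x. \<Sum>i<d. if 0 < n ! i then lam i * r i x * u0 x ^ 2 * a (dec n i) x else 0"])
  fix n :: "nat list" assume n: "n \<in> {n. length n = d}"
  show "continuous_on {x1..x2} (\<lambda>x. \<Sum>i<d. if 0 < n ! i then lam i * r i x * u0 x ^ 2 * a (dec n i) x else 0)"
    using n by (intro continuous_on_sum continuous_on_if_const continuous_intros continuous_r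
        continuous_u0 continuous_a) auto
  fix s assume "s \<in> {x1..x2}"
  then show "(b n has_vector_derivative
      (\<Sum>i<d. if 0 < n ! i then lam i * r i s * u0 s ^ 2 * a (dec n i) s else 0)) (at s within {x1..x2})"
    using n b_deriv by simp
next
  show "uniform_limit {x1..x2}
      (\<lambda>F s. \<Sum>n\<in>F. \<Sum>i<d. if 0 < n ! i then lam i * r i s * u0 s ^ 2 * a (dec n i) s else 0)
      (\<lambda>s. weight s * u0 s ^ 2 * (\<Sum>\<^sub>\<infinity>n\<in>{n. length n = d}. a n s)) (finite_subsets_at_top {n. length n = d})"
    using norm_shifted_series_le has_sum_shifted_series summable_on_shifted_majorant
    by (rule Weierstrass_m_test_general')
next
  fix s assume "s \<in> {x1..x2}"
  then show "((\<lambda>n. b n s) has_sum (\<Sum>\<^sub>\<infinity>n\<in>{n. length n = d}. b n s)) {n. length n = d}"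
    by (intro has_sum_majorant[OF _ b_bound]) auto
qed (use x x1_less_x2 in auto)

lemma ode_sol_series:
  "ode_sol {x1..x2} p q weight (\<lambda>x. u0 x * (\<Sum>\<^sub>\<infinity>n\<in>{n. length n = d}. a n x))
     (\<lambda>x. u0' x / u0 x * (u0 x * (\<Sum>\<^sub>\<infinity>n\<in>{n. length n = d}. a n x))
        + (\<Sum>\<^sub>\<infinity>n\<in>{n. length n = d}. b n x) / (p x * u0 x))"
  by (intro ode_sol_of_first_order_system has_vector_derivative_series_a has_vector_derivative_series_b)

end

lemma linear_independent_if_initial_values:
  fixes f g :: "real \<Rightarrow> complex"
  assumes "x1 < x2" and x0: "x0 \<in> {x1..x2}"
    and g: "(g has_vector_derivative g') (at x0 within {x1..x2})"
    and "f x0 \<noteq> 0" "g x0 = 0" "g' \<noteq> 0"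
  shows "\<forall>c1 c2. (\<forall>x\<in>{x1..x2}. c1 * f x + c2 * g x = 0) \<longrightarrow> c1 = 0 \<and> c2 = 0"
proof (intro allI impI)
  fix c1 c2 assume comb: "\<forall>x\<in>{x1..x2}. c1 * f x + c2 * g x = 0"
  have "c1 * f x0 = 0" using comb[rule_format, OF x0] \<open>g x0 = 0\<close> by simp
  then have c1: "c1 = 0" using \<open>f x0 \<noteq> 0\<close> by simp
  have "c2 = 0"
  proof (rule ccontr)
    assume "c2 \<noteq> 0"
    then have "g x = 0" if "x \<in> {x1..x2}" for x
      using comb c1 that by auto
    then have "(g has_vector_derivative 0) (at x0 within {x1..x2})"
      by (intro has_vector_derivative_transform[OF x0 _ has_vector_derivative_const])
    with g have "g' = 0"
      using vector_derivative_unique_within_closed_interval[OF \<open>x1 < x2\<close>] x0 by (metis cbox_interval)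
    with \<open>g' \<noteq> 0\<close> show False ..
  qed
  with c1 show "c1 = 0 \<and> c2 = 0" ..
qed

section \<open>Initial values\<close>

lemma tb1_zero [simp]: "tb1 x0 p r u0 lam (replicate d 0) x = 0"
  by (simp add: tb1_def Xt_minus_def dbl_def)

lemma
  assumes n: "length n = d"
  shows ta1_x0: "ta1 x0 p r u0 lam n x0 = (if n = replicate d 0 then 1 else 0)"
    and ta2_x0: "ta2 x0 p r u0 lam n x0 = 0"
    and tb1_x0: "tb1 x0 p r u0 lam n x0 = 0"
    and tb2_x0: "tb2 x0 p r u0 lam n x0 = (if n = replicate d 0 then 1 else 0)"
proof -
  have zero_iff: "n = replicate d 0 \<longleftrightarrow> sum_list n = 0"
    using n sum_list_eq_0_iff_replicate by auto
  show "ta1 x0 p r u0 lam n x0 = (if n = replicate d 0 then 1 else 0)"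
  proof (cases "sum_list n = 0")
    case True
    then show ?thesis using zero_iff by (simp add: ta1_def Xt_def lampow_def sum_list_replicate)
  next
    case False
    then have "0 < sum_list n" by linarith
    then have "Xt x0 p r u0 (dbl n) x0 = 0"
      by (simp add: Xt_dbl)
    then show ?thesis using zero_iff False by (simp add: ta1_def)
  qed
  show "ta2 x0 p r u0 lam n x0 = 0"
    by (simp add: ta2_def Xf_dbl)
  have "Xt_minus x0 p r u0 (dbl n) i x0 = 0" if "i < d" for i
  proof (cases "0 < n ! i")
    case True
    then show ?thesis using n that by (simp add: Xt_minus_dbl)
  qed (use n that in \<open>simp add: Xt_minus_def\<close>)
  then show "tb1 x0 p r u0 lam n x0 = 0"
    using n by (simp add: tb1_def)
  show "tb2 x0 p r u0 lam n x0 = (if n = replicate d 0 then 1 else 0)"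
  proof (cases "n = replicate d 0")
    case True
    have "(\<Sum>i<d. Xf_minus x0 p r u0 (dbl n) i x0) = (\<Sum>i<d. 1 / of_nat d)"
      using True by (intro sum.cong) (auto simp: Xf_minus_def dbl_def)
    then show ?thesis
      using True d_ge_1 by (simp add: tb2_def lampow_def sum_list_replicate)
  next
    case False
    then obtain k where k: "k < d" "n ! k \<noteq> 0"
      using n by (metis list_eq_iff_nth_eq length_replicate nth_replicate)
    have "Xf_minus x0 p r u0 (dbl n) i x0 = 0" if "i < d" for i
    proof (cases "0 < n ! i")
      case True
      then show ?thesis using n that by (simp add: Xf_minus_dbl)
    qed (use n k that in \<open>auto simp: Xf_minus_def\<close>)
    then show ?thesis
      using n False by (simp add: tb2_def)
  qed
qed

lemma series_at_x0:
  "(\<Sum>\<^sub>\<infinity>n\<in>{n. length n = d}. ta1 x0 p r u0 lam n x0) = 1"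
  "(\<Sum>\<^sub>\<infinity>n\<in>{n. length n = d}. ta2 x0 p r u0 lam n x0) = 0"
  "(\<Sum>\<^sub>\<infinity>n\<in>{n. length n = d}. tb1 x0 p r u0 lam n x0) = 0"
  "(\<Sum>\<^sub>\<infinity>n\<in>{n. length n = d}. tb2 x0 p r u0 lam n x0) = 1"
proof -
  have zero: "replicate d (0::nat) \<in> {n. length n = d}" by simp
  have "(\<Sum>\<^sub>\<infinity>n\<in>{n. length n = d}. ta1 x0 p r u0 lam n x0)
      = (\<Sum>\<^sub>\<infinity>n\<in>{n. length n = d}. if n = replicate d (0::nat) then 1 else 0)"
    using ta1_x0 by (intro infsum_cong) simp
  then show "(\<Sum>\<^sub>\<infinity>n\<in>{n. length n = d}. ta1 x0 p r u0 lam n x0) = 1"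
    using infsum_if_eq[OF zero] by simp
  have "(\<Sum>\<^sub>\<infinity>n\<in>{n. length n = d}. tb2 x0 p r u0 lam n x0)
      = (\<Sum>\<^sub>\<infinity>n\<in>{n. length n = d}. if n = replicate d (0::nat) then 1 else 0)"
    using tb2_x0 by (intro infsum_cong) simp
  then show "(\<Sum>\<^sub>\<infinity>n\<in>{n. length n = d}. tb2 x0 p r u0 lam n x0) = 1"
    using infsum_if_eq[OF zero] by simp
  show "(\<Sum>\<^sub>\<infinity>n\<in>{n. length n = d}. ta2 x0 p r u0 lam n x0) = 0"
    by (rule infsum_0) (simp add: ta2_x0)
  show "(\<Sum>\<^sub>\<infinity>n\<in>{n. length n = d}. tb1 x0 p r u0 lam n x0) = 0"
    by (rule infsum_0) (simp add: tb1_x0)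
qed

lemma infsum_tb1_nonzero:
  "(\<Sum>\<^sub>\<infinity>n\<in>{n. length n = d} - {replicate d 0}. tb1 x0 p r u0 lam n x)
    = (\<Sum>\<^sub>\<infinity>n\<in>{n. length n = d}. tb1 x0 p r u0 lam n x)"
proof (rule infsum_cong_neutral)
  fix n :: "nat list" assume "n \<in> {n. length n = d} - ({n. length n = d} - {replicate d 0})"
  then have "n = replicate d 0" by simp
  then show "tb1 x0 p r u0 lam n x = 0" by simp
qed auto

definition sol_even :: "real \<Rightarrow> complex" where
  "sol_even x = u0 x * (\<Sum>\<^sub>\<infinity>n\<in>{n. length n = d}. ta1 x0 p r u0 lam n x)"

definition sol_even' :: "real \<Rightarrow> complex" where
  "sol_even' x = u0' x / u0 x * sol_even x + (\<Sum>\<^sub>\<infinity>n\<in>{n. length n = d}. tb1 x0 p r u0 lam n x) / (p x * u0 x)"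

definition sol_odd :: "real \<Rightarrow> complex" where
  "sol_odd x = u0 x * (\<Sum>\<^sub>\<infinity>n\<in>{n. length n = d}. ta2 x0 p r u0 lam n x)"

definition sol_odd' :: "real \<Rightarrow> complex" where
  "sol_odd' x = u0' x / u0 x * sol_odd x + (\<Sum>\<^sub>\<infinity>n\<in>{n. length n = d}. tb2 x0 p r u0 lam n x) / (p x * u0 x)"

lemma ode_sol_even: "ode_sol {x1..x2} p q weight sol_even sol_even'"
  unfolding sol_even'_def sol_even_def
  by (rule ode_sol_series[OF has_vector_derivative_ta1 has_vector_derivative_tb1 norm_ta1_le norm_tb1_le])

lemma ode_sol_odd: "ode_sol {x1..x2} p q weight sol_odd sol_odd'"
  unfolding sol_odd'_def sol_odd_def
  by (rule ode_sol_series[OF has_vector_derivative_ta2 has_vector_derivative_tb2 norm_ta2_le norm_tb2_le])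

lemma initial_values:
  "sol_even x0 = u0 x0" "sol_even' x0 = u0' x0" "sol_odd x0 = 0" "sol_odd' x0 = 1 / (p x0 * u0 x0)"
  using u0_nonzero[OF x0_in] by (simp_all add: sol_even_def sol_even'_def sol_odd_def sol_odd'_def series_at_x0)

lemma linear_independent_solutions:
  "\<forall>c1 c2. (\<forall>x\<in>{x1..x2}. c1 * sol_even x + c2 * sol_odd x = 0) \<longrightarrow> c1 = 0 \<and> c2 = 0"
proof (rule linear_independent_if_initial_values[OF x1_less_x2 x0_in])
  show "(sol_odd has_vector_derivative sol_odd' x0) (at x0 within {x1..x2})"
    using ode_sol_odd x0_in by (simp add: ode_sol_def)
qed (use initial_values u0_nonzero[OF x0_in] p_nonzero[OF x0_in] in simp_all)

lemma uniform_limit_terms: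
  shows uniform_limit_ta1: "uniform_limit {x1..x2} (\<lambda>F x. \<Sum>n\<in>F. ta1 x0 p r u0 lam n x)
      (\<lambda>x. \<Sum>\<^sub>\<infinity>n\<in>{n. length n = d}. ta1 x0 p r u0 lam n x) (finite_subsets_at_top {n. length n = d})"
    and uniform_limit_ta2: "uniform_limit {x1..x2} (\<lambda>F x. \<Sum>n\<in>F. ta2 x0 p r u0 lam n x)
      (\<lambda>x. \<Sum>\<^sub>\<infinity>n\<in>{n. length n = d}. ta2 x0 p r u0 lam n x) (finite_subsets_at_top {n. length n = d})"
    and uniform_limit_tb1: "uniform_limit {x1..x2} (\<lambda>F x. \<Sum>n\<in>F. tb1 x0 p r u0 lam n x)
      (\<lambda>x. \<Sum>\<^sub>\<infinity>n\<in>{n. length n = d} - {replicate d 0}. tb1 x0 p r u0 lam n x)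
      (finite_subsets_at_top ({n. length n = d} - {replicate d 0}))"
    and uniform_limit_tb2: "uniform_limit {x1..x2} (\<lambda>F x. \<Sum>n\<in>F. tb2 x0 p r u0 lam n x)
      (\<lambda>x. \<Sum>\<^sub>\<infinity>n\<in>{n. length n = d}. tb2 x0 p r u0 lam n x) (finite_subsets_at_top {n. length n = d})"
proof -
  show "uniform_limit {x1..x2} (\<lambda>F x. \<Sum>n\<in>F. ta1 x0 p r u0 lam n x)
      (\<lambda>x. \<Sum>\<^sub>\<infinity>n\<in>{n. length n = d}. ta1 x0 p r u0 lam n x) (finite_subsets_at_top {n. length n = d})"
    by (rule uniform_limit_majorant[where c = 1]) (use norm_ta1_le in simp_all)
  show "uniform_limit {x1..x2} (\<lambda>F x. \<Sum>n\<in>F. ta2 x0 p r u0 lam n x)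
      (\<lambda>x. \<Sum>\<^sub>\<infinity>n\<in>{n. length n = d}. ta2 x0 p r u0 lam n x) (finite_subsets_at_top {n. length n = d})"
    by (rule uniform_limit_majorant[where c = growth]) (simp_all add: norm_ta2_le)
  show "uniform_limit {x1..x2} (\<lambda>F x. \<Sum>n\<in>F. tb1 x0 p r u0 lam n x)
      (\<lambda>x. \<Sum>\<^sub>\<infinity>n\<in>{n. length n = d} - {replicate d 0}. tb1 x0 p r u0 lam n x)
      (finite_subsets_at_top ({n. length n = d} - {replicate d 0}))"
    by (rule uniform_limit_majorant[where c = d]) (simp_all add: norm_tb1_le)
  show "uniform_limit {x1..x2} (\<lambda>F x. \<Sum>n\<in>F. tb2 x0 p r u0 lam n x)
      (\<lambda>x. \<Sum>\<^sub>\<infinity>n\<in>{n. length n = d}. tb2 x0 p r u0 lam n x) (finite_subsets_at_top {n. length n = d})"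
    by (rule uniform_limit_majorant[where c = d]) (simp_all add: norm_tb2_le)
qed

end

theorem mainTheorem1:
  fixes d :: nat and x0 x1 x2 :: real
    and p q u0 u0' :: "real \<Rightarrow> complex" and r :: "nat \<Rightarrow> real \<Rightarrow> complex"
    and lam :: "nat \<Rightarrow> complex"
  assumes "d \<ge> 1" and "x1 < x2" and "x0 \<in> {x1..x2}"
    and "continuous_on {x1..x2} p" and "continuous_on {x1..x2} q"
    and "\<forall>i<d. continuous_on {x1..x2} (r i)"
    and "\<exists>p'. continuous_on {x1..x2} p' \<and>
            (\<forall>x\<in>{x1..x2}. (p has_vector_derivative p' x) (at x within {x1..x2}))"
    and "\<forall>x\<in>{x1..x2}. p x \<noteq> 0"
    and "ode_sol {x1..x2} p q (\<lambda>_. 0) u0 u0'"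
    and "\<forall>x\<in>{x1..x2}. u0 x \<noteq> 0"
  defines "u1 \<equiv> \<lambda>x. u0 x * (\<Sum>\<^sub>\<infinity>n\<in>{n. length n = d}. ta1 x0 p r u0 lam n x)"
    and "u2 \<equiv> \<lambda>x. u0 x * (\<Sum>\<^sub>\<infinity>n\<in>{n. length n = d}. ta2 x0 p r u0 lam n x)"
    and "u1' \<equiv> \<lambda>x. u0' x / u0 x * (u0 x * (\<Sum>\<^sub>\<infinity>n\<in>{n. length n = d}. ta1 x0 p r u0 lam n x))
                 + (\<Sum>\<^sub>\<infinity>n\<in>{n. length n = d} - {replicate d 0}. tb1 x0 p r u0 lam n x) / (p x * u0 x)"
    and "u2' \<equiv> \<lambda>x. u0' x / u0 x * (u0 x * (\<Sum>\<^sub>\<infinity>n\<in>{n. length n = d}. ta2 x0 p r u0 lam n x))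
                 + (\<Sum>\<^sub>\<infinity>n\<in>{n. length n = d}. tb2 x0 p r u0 lam n x) / (p x * u0 x)"
    and "w \<equiv> \<lambda>x. \<Sum>i<d. lam i * r i x"
  shows "uniform_limit {x1..x2} (\<lambda>F x. \<Sum>n\<in>F. ta1 x0 p r u0 lam n x)
           (\<lambda>x. \<Sum>\<^sub>\<infinity>n\<in>{n. length n = d}. ta1 x0 p r u0 lam n x)
           (finite_subsets_at_top {n. length n = d})
       \<and> uniform_limit {x1..x2} (\<lambda>F x. \<Sum>n\<in>F. ta2 x0 p r u0 lam n x)
           (\<lambda>x. \<Sum>\<^sub>\<infinity>n\<in>{n. length n = d}. ta2 x0 p r u0 lam n x)
           (finite_subsets_at_top {n. length n = d})
       \<and> uniform_limit {x1..x2} (\<lambda>F x. \<Sum>n\<in>F. tb1 x0 p r u0 lam n x)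
           (\<lambda>x. \<Sum>\<^sub>\<infinity>n\<in>{n. length n = d} - {replicate d 0}. tb1 x0 p r u0 lam n x)
           (finite_subsets_at_top ({n. length n = d} - {replicate d 0}))
       \<and> uniform_limit {x1..x2} (\<lambda>F x. \<Sum>n\<in>F. tb2 x0 p r u0 lam n x)
           (\<lambda>x. \<Sum>\<^sub>\<infinity>n\<in>{n. length n = d}. tb2 x0 p r u0 lam n x)
           (finite_subsets_at_top {n. length n = d})
       \<and> ode_sol {x1..x2} p q w u1 u1'
       \<and> ode_sol {x1..x2} p q w u2 u2'
       \<and> (\<forall>c1 c2 :: complex. (\<forall>x\<in>{x1..x2}. c1 * u1 x + c2 * u2 x = 0) \<longrightarrow> c1 = 0 \<and> c2 = 0)
       \<and> u1 x0 = u0 x0 \<and> u1' x0 = u0' x0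
       \<and> u2 x0 = 0 \<and> u2' x0 = 1 / (p x0 * u0 x0)"
proof -
  interpret formal_power_series d x0 x1 x2 p q u0 u0' r lam
    using assms(1-4,6,8-10) by unfold_locales auto
  have solutions: "u1 = sol_even" "u1' = sol_even'" "u2 = sol_odd" "u2' = sol_odd'" "w = weight"
    by (simp_all add: fun_eq_iff u1_def u1'_def u2_def u2'_def w_def sol_even_def sol_even'_def
        sol_odd_def sol_odd'_def weight_def infsum_tb1_nonzero)
  show ?thesis
    unfolding solutions
    by (intro conjI uniform_limit_terms ode_sol_even ode_sol_odd linear_independent_solutions initial_values)
qed

end
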